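(* Let $Y^A$ be a vector field on an open set $\mathscr U\subset S^2$ satisfying $\nabla^AY^B+\nabla^BY^A-\nabla_CY^C\sigma^{AB}=0$ on $\mathscr U$, set $Y^1=\tfrac12\nabla_CY^C$, and let $u$ be a smooth function with compact support in $\mathscr U$. Then \[\int_{\mathscr U}Y^1\big[2\nabla_A\nabla_Bu\,\nabla^A\nabla^Bu-(\Delta u)^2\big]=\int_{\mathscr U}Y^1\big[(\Delta+2)u\big]^2+2\int_{\mathscr U}u\,(\nabla^A\nabla^BY^1)\big(\nabla_A\nabla_Bu-\tfrac12\Delta u\,\sigma_{AB}\big).\]
   Context: $(S^2,\sigma_{AB})$ is the unit round sphere with Levi-Civita connection $\nabla$ and Laplacian $\Delta$; indices raised/lowered with $\sigma$; integrals with respect to area measure; $Y^A$ smooth. *)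

theory Defs
  imports "HOL-Analysis.Analysis"
begin

text \<open>The unit round sphere S2 is realised extrinsically as sphere 0 1 in real^3.
  A function (or tangent vector field) f given on a subset U of S2 is represented
  by its 0-homogeneous extension to the open cone over U; smoothness on U and the
  intrinsic derivatives are computed from this extension.\<close>

definition hext :: "(real^3 \<Rightarrow> 'b) \<Rightarrow> real^3 \<Rightarrow> 'b" where
  "hext f y = f (sgn y)"

definition scone :: "(real^3) set \<Rightarrow> (real^3) set" where
  "scone U = {y. y \<noteq> 0 \<and> sgn y \<in> U}"

fun Ck :: "nat \<Rightarrow> 'a set \<Rightarrow> ('a::real_normed_vector \<Rightarrow> 'b::real_normed_vector) \<Rightarrow> bool" where
  "Ck 0 S f = continuous_on S f"
| "Ck (Suc n) S f = (continuous_on S f \<and> (\<forall>x\<in>S. f differentiable (at x))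
      \<and> (\<forall>v. Ck n S (\<lambda>x. frechet_derivative f (at x) v)))"

definition Cinf_on :: "'a set \<Rightarrow> ('a::real_normed_vector \<Rightarrow> 'b::real_normed_vector) \<Rightarrow> bool" where
  "Cinf_on S f = (\<forall>n. Ck n S f)"

definition D1 :: "('a::real_normed_vector \<Rightarrow> 'b::real_normed_vector) \<Rightarrow> 'a \<Rightarrow> 'a \<Rightarrow> 'b" where
  "D1 f x v = frechet_derivative f (at x) v"

definition D2 :: "('a::real_normed_vector \<Rightarrow> 'b::real_normed_vector) \<Rightarrow> 'a \<Rightarrow> 'a \<Rightarrow> 'a \<Rightarrow> 'b" where
  "D2 f x v w = frechet_derivative (\<lambda>y. frechet_derivative f (at y) v) (at x) w"

definition tproj :: "real^3 \<Rightarrow> real^3 \<Rightarrow> real^3" where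
  "tproj x v = v - (v \<bullet> x) *\<^sub>R x"

text \<open>Covariant Hessian nabla_A nabla_B u at x in S2, evaluated on tangent vectors
  (for the 0-homogeneous extension the radial correction vanishes).\<close>
definition sph_hess :: "(real^3 \<Rightarrow> real) \<Rightarrow> real^3 \<Rightarrow> real^3 \<Rightarrow> real^3 \<Rightarrow> real" where
  "sph_hess u x v w = D2 (hext u) x v w"

definition sph_lap :: "(real^3 \<Rightarrow> real) \<Rightarrow> real^3 \<Rightarrow> real" where
  "sph_lap u x = (\<Sum>b\<in>Basis. sph_hess u x (tproj x b) (tproj x b))"

definition sph_hess_sq :: "(real^3 \<Rightarrow> real) \<Rightarrow> real^3 \<Rightarrow> real" where
  "sph_hess_sq u x = (\<Sum>b\<in>Basis. \<Sum>c\<in>Basis. (sph_hess u x (tproj x b) (tproj x c))^2)"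

definition sph_hess_pair :: "(real^3 \<Rightarrow> real) \<Rightarrow> (real^3 \<Rightarrow> real) \<Rightarrow> real^3 \<Rightarrow> real" where
  "sph_hess_pair f u x = (\<Sum>b\<in>Basis. \<Sum>c\<in>Basis.
      sph_hess f x (tproj x b) (tproj x c) *
      (sph_hess u x (tproj x b) (tproj x c) - sph_lap u x / 2 * (tproj x b \<bullet> tproj x c)))"

definition cov_deriv :: "(real^3 \<Rightarrow> real^3) \<Rightarrow> real^3 \<Rightarrow> real^3 \<Rightarrow> real^3 \<Rightarrow> real" where
  "cov_deriv Y x v w = D1 (hext Y) x v \<bullet> w"

definition sph_div :: "(real^3 \<Rightarrow> real^3) \<Rightarrow> real^3 \<Rightarrow> real" where
  "sph_div Y x = (\<Sum>b\<in>Basis. cov_deriv Y x (tproj x b) (tproj x b))"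

definition conformal_killing_on :: "(real^3) set \<Rightarrow> (real^3 \<Rightarrow> real^3) \<Rightarrow> bool" where
  "conformal_killing_on U Y = (\<forall>x\<in>U. \<forall>v w. v \<bullet> x = 0 \<longrightarrow> w \<bullet> x = 0 \<longrightarrow>
      cov_deriv Y x v w + cov_deriv Y x w v - sph_div Y x * (v \<bullet> w) = 0)"

definition sph_par :: "real \<times> real \<Rightarrow> real^3" where
  "sph_par p = vector [sin (fst p) * cos (snd p), sin (fst p) * sin (snd p), cos (fst p)]"

definition sphere_integral :: "(real^3 \<Rightarrow> real) \<Rightarrow> real" where
  "sphere_integral f = integral (cbox (0, 0) (pi, 2 * pi)) (\<lambda>p. f (sph_par p) * sin (fst p))"

definition sphere_integral_on :: "(real^3) set \<Rightarrow> (real^3 \<Rightarrow> real) \<Rightarrow> real" where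
  "sphere_integral_on U f = sphere_integral (\<lambda>x. if x \<in> U then f x else 0)"

end

theory Submission
  imports Defs
begin

text \<open>Write Y1 = div Y / 2. For a conformal Killing field on the round sphere, Y1 satisfies
  (Delta + 2) Y1 = 0: in the orthonormal frame (e_theta, e_phi) of spherical coordinates the
  conformal Killing equations say that Y1 = d_theta Y_theta and express d_phi Y_theta and d_phi Y_phi
  through theta-derivatives, and differentiating these relations gives the eigenvalue equation.
  Granting it, the difference of the two sides of the identity is, pointwise, the divergence of an
  explicit vector field W, bilinear in the 2-jet of u and linear in the 1-jet of Y1. In spherical
  coordinates sin theta * div W = d_theta (sin theta * W_theta) + d_phi W_phi; integrating over
  [0, pi] x [0, 2 pi], the phi-term vanishes by periodicity, the theta-term because sin theta
  vanishes at the poles, and W vanishes wherever u does, so nothing happens at the boundary of U.\<close>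

section \<open>Calculus of the classes C^k\<close>

abbreviation fd :: "('a::real_normed_vector \<Rightarrow> 'b::real_normed_vector) \<Rightarrow> 'a \<Rightarrow> 'a \<Rightarrow> 'b" where
  "fd f x \<equiv> frechet_derivative f (at x)"

lemma fd_has_derivative: "f differentiable (at x) \<Longrightarrow> (f has_derivative fd f x) (at x)"
  using frechet_derivative_works by blast

lemma fd_eq: "(f has_derivative f') (at x) \<Longrightarrow> fd f x = f'"
  by (simp add: frechet_derivative_at[symmetric])

lemma linear_fd: "f differentiable (at x) \<Longrightarrow> linear (fd f x)"
  by (rule linear_frechet_derivative)

lemma fd_cong_open:
  assumes "open S" "x \<in> S" "\<And>y. y \<in> S \<Longrightarrow> f y = g y" "f differentiable (at x)"
  shows "fd g x = fd f x" "g differentiable (at x)"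
proof -
  have "(g has_derivative fd f x) (at x)"
    by (rule has_derivative_transform_within_open[OF fd_has_derivative[OF assms(4)] assms(1,2)])
       (use assms(3) in auto)
  then show "fd g x = fd f x" "g differentiable (at x)"
    by (auto simp: fd_eq differentiable_def)
qed

lemma fd_locally_zero:
  "open S \<Longrightarrow> y \<in> S \<Longrightarrow> (\<And>z. z \<in> S \<Longrightarrow> f z = 0) \<Longrightarrow> fd f y = (\<lambda>v. 0)"
  using fd_cong_open[of S y "\<lambda>z. 0" f] by (simp add: frechet_derivative_const)

lemma fd_expand_Basis:
  fixes f :: "'a::euclidean_space \<Rightarrow> 'b::real_normed_vector"
  assumes "f differentiable (at x)"
  shows "fd f x v = (\<Sum>i\<in>Basis. (v \<bullet> i) *\<^sub>R fd f x i)"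
proof -
  have "fd f x v = fd f x (\<Sum>i\<in>Basis. (v \<bullet> i) *\<^sub>R i)"
    by (simp add: euclidean_representation)
  also have "\<dots> = (\<Sum>i\<in>Basis. (v \<bullet> i) *\<^sub>R fd f x i)"
    using linear_fd[OF assms] by (simp add: linear_sum linear_scale)
  finally show ?thesis .
qed

lemma Ck_cong: "open S \<Longrightarrow> (\<And>x. x \<in> S \<Longrightarrow> f x = g x) \<Longrightarrow> Ck n S f \<Longrightarrow> Ck n S g"
proof (induction n arbitrary: f g)
  case 0
  then show ?case using continuous_on_cong by (metis Ck.simps(1))
next
  case (Suc n)
  have "continuous_on S g"
    using Suc.prems continuous_on_cong by (metis Ck.simps(2))
  moreover have d: "\<And>x. x \<in> S \<Longrightarrow> fd g x = fd f x \<and> g differentiable (at x)"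
    using fd_cong_open[OF Suc.prems(1) _ Suc.prems(2)] Suc.prems(3) by auto
  moreover have "Ck n S (\<lambda>x. fd g x v)" for v
    by (rule Suc.IH[of "\<lambda>x. fd f x v"]) (use Suc.prems d in auto)
  ultimately show ?case by auto
qed

lemma Ck_Suc_imp_Ck: "Ck (Suc n) S f \<Longrightarrow> Ck n S f"
proof (induction n arbitrary: f)
  case 0
  then show ?case by simp
next
  case (Suc n)
  then show ?case by (metis Ck.simps(2))
qed

lemma Ck_imp_continuous_on: "Ck n S f \<Longrightarrow> continuous_on S f"
  by (cases n) auto

lemma Ck_union:
  "open A \<Longrightarrow> open B \<Longrightarrow> Ck n A f \<Longrightarrow> Ck n B f \<Longrightarrow> Ck n (A \<union> B) f"
  by (induction n arbitrary: f) (auto simp: continuous_on_open_Un)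

lemma Cinf_imp_Ck: "Cinf_on S f \<Longrightarrow> Ck n S f"
  by (simp add: Cinf_on_def)

lemma Cinf_fd: "Cinf_on S f \<Longrightarrow> Cinf_on S (\<lambda>x. fd f x v)"
  unfolding Cinf_on_def by (metis Ck.simps(2))

lemma Cinf_imp_differentiable: "Cinf_on S f \<Longrightarrow> x \<in> S \<Longrightarrow> f differentiable (at x)"
  unfolding Cinf_on_def by (metis Ck.simps(2))

lemma Cinf_imp_continuous_on: "Cinf_on S f \<Longrightarrow> continuous_on S f"
  unfolding Cinf_on_def by (metis Ck.simps(1))

lemma Cinf_cong: "open S \<Longrightarrow> (\<And>x. x \<in> S \<Longrightarrow> f x = g x) \<Longrightarrow> Cinf_on S f \<Longrightarrow> Cinf_on S g"
  unfolding Cinf_on_def using Ck_cong by blast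

lemma Cinf_union: "open A \<Longrightarrow> open B \<Longrightarrow> Cinf_on A f \<Longrightarrow> Cinf_on B f \<Longrightarrow> Cinf_on (A \<union> B) f"
  unfolding Cinf_on_def using Ck_union by blast

lemma Ck_const: "Ck n S (\<lambda>x. c)"
  by (induction n arbitrary: c) simp_all

lemma Ck_bounded_linear: "bounded_linear L \<Longrightarrow> Ck n S L"
proof (induction n)
  case 0
  then show ?case by (simp add: linear_continuous_on)
next
  case (Suc n)
  have "fd L x = L" for x
    using Suc.prems by (simp add: fd_eq bounded_linear_imp_has_derivative)
  then show ?case
    using Suc.prems by (simp add: Ck_const linear_continuous_on bounded_linear_imp_differentiable)
qed

lemma Ck_bounded_linear_comp:
  assumes L: "bounded_linear L" and S: "open S"
  shows "Ck n S f \<Longrightarrow> Ck n S (\<lambda>x. L (f x))"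
proof (induction n arbitrary: f)
  case 0
  then show ?case by (simp add: bounded_linear.continuous_on[OF L])
next
  case (Suc n)
  have d: "x \<in> S \<Longrightarrow> ((\<lambda>x. L (f x)) has_derivative (\<lambda>v. L (fd f x v))) (at x)" for x
    using Suc.prems by (intro bounded_linear.has_derivative[OF L] fd_has_derivative) auto
  have "Ck n S (\<lambda>x. fd (\<lambda>x. L (f x)) x v)" for v
    by (rule Ck_cong[OF S _ Suc.IH[of "\<lambda>x. fd f x v"]]) (use Suc.prems fd_eq[OF d] in auto)
  then show ?case
    using Suc.prems d by (auto simp: bounded_linear.continuous_on[OF L] intro: differentiableI)
qed

lemma Ck_add: "open S \<Longrightarrow> Ck n S f \<Longrightarrow> Ck n S g \<Longrightarrow> Ck n S (\<lambda>x. f x + g x)"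
proof (induction n arbitrary: f g)
  case 0
  then show ?case by (simp add: continuous_on_add)
next
  case (Suc n)
  have d: "x \<in> S \<Longrightarrow> ((\<lambda>x. f x + g x) has_derivative (\<lambda>v. fd f x v + fd g x v)) (at x)" for x
    using Suc.prems(2,3) by (intro has_derivative_add fd_has_derivative) auto
  have "Ck n S (\<lambda>x. fd (\<lambda>x. f x + g x) x v)" for v
    by (rule Ck_cong[OF Suc.prems(1) _ Suc.IH[of "\<lambda>x. fd f x v" "\<lambda>x. fd g x v"]])
       (use Suc.prems fd_eq[OF d] in auto)
  then show ?case
    using Suc.prems d by (auto simp: continuous_on_add intro: differentiableI)
qed

lemma Ck_bounded_bilinear:
  fixes f :: "'a::real_normed_vector \<Rightarrow> 'b::real_normed_vector" and g :: "'a \<Rightarrow> 'c::real_normed_vector"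
  assumes B: "bounded_bilinear (bop :: 'b \<Rightarrow> 'c \<Rightarrow> 'd::real_normed_vector)" and S: "open S"
  shows "Ck n S f \<Longrightarrow> Ck n S g \<Longrightarrow> Ck n S (\<lambda>x. bop (f x) (g x))"
proof (induction n arbitrary: f g)
  case 0
  then show ?case by (simp add: bounded_bilinear.continuous_on[OF B])
next
  case (Suc n)
  have d: "x \<in> S \<Longrightarrow> ((\<lambda>x. bop (f x) (g x)) has_derivative
      (\<lambda>v. bop (f x) (fd g x v) + bop (fd f x v) (g x))) (at x)" for x
    using Suc.prems by (intro bounded_bilinear.FDERIV[OF B] fd_has_derivative) auto
  have "Ck n S (\<lambda>x. bop (f x) (fd g x v) + bop (fd f x v) (g x))" for v
    using Suc.prems by (intro Ck_add[OF S] Suc.IH) (auto intro: Ck_Suc_imp_Ck)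
  then have "Ck n S (\<lambda>x. fd (\<lambda>x. bop (f x) (g x)) x v)" for v
    by (rule Ck_cong[OF S, rotated]) (use fd_eq[OF d] in auto)
  then show ?case
    using Suc.prems d by (auto simp: bounded_bilinear.continuous_on[OF B] intro: differentiableI)
qed

lemmas Ck_mult = Ck_bounded_bilinear[OF bounded_bilinear_mult]
lemmas Ck_scaleR = Ck_bounded_bilinear[OF bounded_bilinear_scaleR]
lemmas Ck_inner = Ck_bounded_bilinear[OF bounded_bilinear_inner]

lemma Ck_diff: "open S \<Longrightarrow> Ck n S f \<Longrightarrow> Ck n S g \<Longrightarrow> Ck n S (\<lambda>x. f x - g x)"
proof -
  assume a: "open S" "Ck n S f" "Ck n S g"
  have "Ck n S (\<lambda>x. f x + (-1::real) *\<^sub>R g x)"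
    by (rule Ck_add[OF a(1,2)], rule Ck_scaleR[OF a(1) Ck_const a(3)])
  then show ?thesis by simp
qed

lemma Ck_sum:
  assumes "open S" "finite I" "\<And>i. i \<in> I \<Longrightarrow> Ck n S (f i)"
  shows "Ck n S (\<lambda>x. \<Sum>i\<in>I. f i x)"
  using assms(2,3) by (induction I rule: finite_induct) (simp_all add: Ck_const Ck_add assms(1))

lemma Ck_comp:
  fixes f :: "'b::euclidean_space \<Rightarrow> real" and m :: "'a::real_normed_vector \<Rightarrow> 'b"
  assumes S: "open S" and T: "open T" and mT: "m ` T \<subseteq> S"
  shows "Ck n S f \<Longrightarrow> Ck n T m \<Longrightarrow> Ck n T (\<lambda>x. f (m x))"
proof (induction n arbitrary: f)
  case 0
  then show ?case using mT by (auto intro: continuous_on_compose2)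
next
  case (Suc n)
  have mx: "x \<in> T \<Longrightarrow> m x \<in> S" for x using mT by auto
  have d: "x \<in> T \<Longrightarrow> ((\<lambda>x. f (m x)) has_derivative (\<lambda>v. fd f (m x) (fd m x v))) (at x)" for x
    using diff_chain_at[OF fd_has_derivative fd_has_derivative, of m x f] Suc.prems mx
    by (auto simp: o_def)
  have sum_Ck: "Ck n T (\<lambda>x. \<Sum>i\<in>Basis. (fd m x v \<bullet> i) * fd f (m x) i)" for v
  proof (intro Ck_sum[OF T] Ck_mult[OF T] finite_Basis)
    fix i :: 'b
    show "Ck n T (\<lambda>x. fd m x v \<bullet> i)"
      using Ck_bounded_linear_comp[OF bounded_linear_inner_left T, of n "\<lambda>x. fd m x v" i] Suc.prems(2)
      by simp
    show "Ck n T (\<lambda>x. fd f (m x) i)"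
      using Suc.IH[of "\<lambda>y. fd f y i"] Suc.prems Ck_Suc_imp_Ck by auto
  qed
  have "Ck n T (\<lambda>x. fd (\<lambda>x. f (m x)) x v)" for v
  proof (rule Ck_cong[OF T _ sum_Ck])
    fix x assume "x \<in> T"
    then show "(\<Sum>i\<in>Basis. (fd m x v \<bullet> i) * fd f (m x) i) = fd (\<lambda>x. f (m x)) x v"
      using fd_eq[OF d, of x] fd_expand_Basis[of f "m x" "fd m x v"] Suc.prems(1) mx by simp
  qed
  then show ?case
    using Suc.prems mT d by (auto intro: continuous_on_compose2 differentiableI)
qed

lemma Ck_componentwise:
  fixes m :: "'a::real_normed_vector \<Rightarrow> 'b::euclidean_space"
  assumes T: "open T"
  shows "(\<And>i. i \<in> Basis \<Longrightarrow> Ck n T (\<lambda>x. m x \<bullet> i)) \<Longrightarrow> Ck n T m"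
proof (induction n arbitrary: m)
  case 0
  then show ?case by (simp add: continuous_on_componentwise[of T m])
next
  case (Suc n)
  define m' where "m' x v = (\<Sum>i\<in>Basis. fd (\<lambda>x. m x \<bullet> i) x v *\<^sub>R i)" for x v
  have m'_inner: "m' x v \<bullet> j = fd (\<lambda>x. m x \<bullet> j) x v" if "j \<in> Basis" for x v j
    using that by (auto simp: m'_def inner_sum_left inner_Basis if_distrib cong: if_cong)
  have d: "(m has_derivative m' x) (at x)" if x: "x \<in> T" for x
  proof -
    have "((\<lambda>x. m x \<bullet> j) has_derivative (\<lambda>v. m' x v \<bullet> j)) (at x)" if j: "j \<in> Basis" for j
      using Suc.prems[OF j] x j by (auto simp: m'_inner intro: fd_has_derivative)
    then show ?thesis by (subst has_derivative_componentwise_within) auto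
  qed
  have "Ck n T (\<lambda>x. fd m x v)" for v
    by (rule Suc.IH, rule Ck_cong[OF T, of "\<lambda>x. fd (\<lambda>x. m x \<bullet> i) x v" for i])
       (use fd_eq[OF d] m'_inner Suc.prems in auto)
  moreover have "x \<in> T \<Longrightarrow> m differentiable (at x)" for x
    using d differentiableI by blast
  ultimately show ?case
    using Suc.prems by (auto simp: continuous_on_componentwise[of T m])
qed

lemma Ck_inverse_norm:
  fixes S :: "'a::real_inner set"
  assumes S: "open S" and "0 \<notin> S"
  shows "Ck n S (\<lambda>y. inverse (norm y))"
proof (induction n)
  case 0
  show ?case
    by (simp, rule continuous_on_inverse[OF continuous_on_norm_id]) (use assms(2) in auto)
next
  case (Suc n)
  have d: "y \<in> S \<Longrightarrow> ((\<lambda>y. inverse (norm y)) has_derivative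
      (\<lambda>v. - (inverse (norm y) * ((v \<bullet> y) * inverse (norm y)) * inverse (norm y)))) (at y)" for y
    using assms(2) has_derivative_norm[of y]
    by (intro Deriv.has_derivative_inverse) (auto simp: sgn_div_norm divide_inverse mult.commute)
  have D: "Ck n S (\<lambda>y. (-1) * ((inverse (norm y) * ((v \<bullet> y) * inverse (norm y))) * inverse (norm y)))" for v
    by (intro Ck_mult[OF S] Ck_const Suc Ck_bounded_linear bounded_linear_inner_right)
  have "Ck n S (\<lambda>x. fd (\<lambda>y. inverse (norm y)) x v)" for v
    by (rule Ck_cong[OF S _ D[of v]]) (use fd_eq[OF d] in simp)
  moreover have "x \<in> S \<Longrightarrow> (\<lambda>y. inverse (norm y)) differentiable (at x)" for x
    using d differentiableI by blast
  ultimately show ?case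
    using Ck_imp_continuous_on[OF Suc] by simp
qed

lemma Ck_sgn:
  fixes S :: "'a::euclidean_space set"
  assumes "open S" "0 \<notin> S"
  shows "Ck n S sgn"
proof (rule Ck_componentwise[OF assms(1)])
  fix i :: 'a
  have "Ck n S (\<lambda>y. (y \<bullet> i) * inverse (norm y))"
    by (intro Ck_mult Ck_bounded_linear bounded_linear_inner_left Ck_inverse_norm assms)
  then show "Ck n S (\<lambda>x. sgn x \<bullet> i)"
    by (simp add: sgn_div_norm divide_inverse mult.commute)
qed

lemma Ck_sin_cos:
  fixes l :: "'a::real_normed_vector \<Rightarrow> real"
  assumes l: "bounded_linear l" and S: "open S"
  shows "Ck n S (\<lambda>x. sin (l x)) \<and> Ck n S (\<lambda>x. cos (l x))"
proof (induction n)
  case 0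
  then show ?case using l by (simp add: continuous_on_sin continuous_on_cos linear_continuous_on)
next
  case (Suc n)
  have d1: "((\<lambda>x. sin (l x)) has_derivative (\<lambda>v. cos (l x) * l v)) (at x)" for x
    using has_derivative_sin[OF bounded_linear_imp_has_derivative[OF l]] by (simp add: mult.commute)
  have d2: "((\<lambda>x. cos (l x)) has_derivative (\<lambda>v. ((-1) * sin (l x)) * l v)) (at x)" for x
    using has_derivative_cos[OF bounded_linear_imp_has_derivative[OF l]] by (simp add: mult.commute)
  have "Ck n S (\<lambda>x. fd (\<lambda>x. sin (l x)) x v)" for v
    unfolding fd_eq[OF d1] by (rule Ck_mult[OF S]) (use Suc Ck_const in auto)
  moreover have "Ck n S (\<lambda>x. fd (\<lambda>x. cos (l x)) x v)" for v
    unfolding fd_eq[OF d2] by (intro Ck_mult[OF S] Ck_const) (use Suc in auto)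
  moreover have "continuous_on S (\<lambda>x. sin (l x))" "continuous_on S (\<lambda>x. cos (l x))"
    using l by (simp_all add: continuous_on_sin continuous_on_cos linear_continuous_on)
  moreover have "(\<lambda>x. sin (l x)) differentiable (at x)" "(\<lambda>x. cos (l x)) differentiable (at x)" for x
    using d1 d2 differentiableI by blast+
  ultimately show ?case by simp
qed

section \<open>Partial derivatives in the (theta, phi)-plane\<close>

definition d_theta :: "(real \<times> real \<Rightarrow> real) \<Rightarrow> real \<times> real \<Rightarrow> real" where
  "d_theta f q = fd f q (1, 0)"

definition d_phi :: "(real \<times> real \<Rightarrow> real) \<Rightarrow> real \<times> real \<Rightarrow> real" where
  "d_phi f q = fd f q (0, 1)"

lemma Ck_d_theta: "Ck (Suc n) Q f \<Longrightarrow> Ck n Q (d_theta f)"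
  unfolding d_theta_def by auto

lemma Ck_d_phi: "Ck (Suc n) Q f \<Longrightarrow> Ck n Q (d_phi f)"
  unfolding d_phi_def by auto

lemma Cinf_d_theta: "Cinf_on Q f \<Longrightarrow> Cinf_on Q (d_theta f)"
  unfolding d_theta_def by (rule Cinf_fd)

lemma Cinf_d_phi: "Cinf_on Q f \<Longrightarrow> Cinf_on Q (d_phi f)"
  unfolding d_phi_def by (rule Cinf_fd)

lemma d_theta_cong:
  "open Q \<Longrightarrow> q \<in> Q \<Longrightarrow> (\<And>y. y \<in> Q \<Longrightarrow> f y = g y) \<Longrightarrow> f differentiable (at q) \<Longrightarrow> d_theta g q = d_theta f q"
  unfolding d_theta_def using fd_cong_open by metis

lemma d_phi_cong:
  "open Q \<Longrightarrow> q \<in> Q \<Longrightarrow> (\<And>y. y \<in> Q \<Longrightarrow> f y = g y) \<Longrightarrow> f differentiable (at q) \<Longrightarrow> d_phi g q = d_phi f q"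
  unfolding d_phi_def using fd_cong_open by metis

lemma d_theta_locally_zero: "open Q \<Longrightarrow> (\<And>z. z \<in> Q \<Longrightarrow> f z = 0) \<Longrightarrow> q \<in> Q \<Longrightarrow> d_theta f q = 0"
  unfolding d_theta_def using fd_locally_zero by metis

lemma d_phi_locally_zero: "open Q \<Longrightarrow> (\<And>z. z \<in> Q \<Longrightarrow> f z = 0) \<Longrightarrow> q \<in> Q \<Longrightarrow> d_phi f q = 0"
  unfolding d_phi_def using fd_locally_zero by metis

lemma fd_Pair_decomp:
  assumes "f differentiable (at q)"
  shows "fd f q (a, b) = a * d_theta f q + b * d_phi f q"
proof -
  have "fd f q (a *\<^sub>R (1, 0) + b *\<^sub>R (0, 1)) = a * fd f q (1, 0) + b * fd f q (0, 1)"
    using linear_fd[OF assms] by (simp only: linear_add linear_scale real_scaleR_def)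
  then show ?thesis unfolding d_theta_def d_phi_def by simp
qed

lemma has_real_derivative_d_theta:
  assumes "f differentiable (at (t, y))"
  shows "((\<lambda>t. f (t, y)) has_real_derivative d_theta f (t, y)) (at t)"
proof -
  have "((\<lambda>t. (t, y)) has_derivative (\<lambda>h. (h, 0))) (at t)"
    by (auto intro!: derivative_eq_intros)
  from diff_chain_at[OF this fd_has_derivative[OF assms]]
  have "((\<lambda>t. f (t, y)) has_derivative (\<lambda>h. fd f (t, y) (h, 0))) (at t)"
    by (simp add: o_def)
  moreover have "(\<lambda>h. fd f (t, y) (h, 0)) = (\<lambda>h. d_theta f (t, y) * h)"
    using fd_Pair_decomp[OF assms] by (auto simp: mult.commute)
  ultimately show ?thesis by (simp add: has_field_derivative_def)
qed

lemma has_real_derivative_d_phi: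
  assumes "f differentiable (at (t, y))"
  shows "((\<lambda>y. f (t, y)) has_real_derivative d_phi f (t, y)) (at y)"
proof -
  have "((\<lambda>y. (t, y)) has_derivative (\<lambda>h. (0, h))) (at y)"
    by (auto intro!: derivative_eq_intros)
  from diff_chain_at[OF this fd_has_derivative[OF assms]]
  have "((\<lambda>y. f (t, y)) has_derivative (\<lambda>h. fd f (t, y) (0, h))) (at y)"
    by (simp add: o_def)
  moreover have "(\<lambda>h. fd f (t, y) (0, h)) = (\<lambda>h. d_phi f (t, y) * h)"
    using fd_Pair_decomp[OF assms] by (auto simp: mult.commute)
  ultimately show ?thesis by (simp add: has_field_derivative_def)
qed

lemma Cinf_has_real_derivative_d_theta:
  "Cinf_on Q f \<Longrightarrow> (t, y) \<in> Q \<Longrightarrow> ((\<lambda>t. f (t, y)) has_real_derivative d_theta f (t, y)) (at t)"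
  using has_real_derivative_d_theta Cinf_imp_differentiable by blast

lemma Cinf_has_real_derivative_d_phi:
  "Cinf_on Q f \<Longrightarrow> (t, y) \<in> Q \<Longrightarrow> ((\<lambda>y. f (t, y)) has_real_derivative d_phi f (t, y)) (at y)"
  using has_real_derivative_d_phi Cinf_imp_differentiable by blast

lemma open_slice_fst: "open (Q :: (real \<times> real) set) \<Longrightarrow> open {t. (t, y) \<in> Q}"
  using continuous_open_vimage[of Q "\<lambda>t::real. (t, y)"] by (auto intro!: continuous_intros simp: vimage_def)

lemma open_slice_snd: "open (Q :: (real \<times> real) set) \<Longrightarrow> open {y. (t, y) \<in> Q}"
  using continuous_open_vimage[of Q "\<lambda>y::real. (t, y)"] by (auto intro!: continuous_intros simp: vimage_def)

lemma d_theta_via: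
  assumes Q: "open Q" and q: "(t, y) \<in> Q" and d: "f differentiable (at (t, y))"
    and e: "\<And>t'. (t', y) \<in> Q \<Longrightarrow> f (t', y) = E t'" and D: "(E has_real_derivative D) (at t)"
  shows "d_theta f (t, y) = D"
proof -
  have "((\<lambda>t'. f (t', y)) has_real_derivative D) (at t)"
    by (rule has_field_derivative_transform_within_open[OF D open_slice_fst[OF Q]]) (use q e in auto)
  then show ?thesis using has_real_derivative_d_theta[OF d] DERIV_unique by blast
qed

lemma d_phi_via:
  assumes Q: "open Q" and q: "(t, y) \<in> Q" and d: "f differentiable (at (t, y))"
    and e: "\<And>y'. (t, y') \<in> Q \<Longrightarrow> f (t, y') = E y'" and D: "(E has_real_derivative D) (at y)"
  shows "d_phi f (t, y) = D"
proof -
  have "((\<lambda>y'. f (t, y')) has_real_derivative D) (at y)"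
    by (rule has_field_derivative_transform_within_open[OF D open_slice_snd[OF Q]]) (use q e in auto)
  then show ?thesis using has_real_derivative_d_phi[OF d] DERIV_unique by blast
qed

lemma second_difference_d_phi_d_theta:
  assumes f: "Ck 2 Q f" and h: "h > 0"
    and box: "\<And>a b. x \<le> a \<Longrightarrow> a \<le> x + h \<Longrightarrow> y \<le> b \<Longrightarrow> b \<le> y + h \<Longrightarrow> (a, b) \<in> Q"
  obtains \<xi> \<eta> where "x < \<xi>" "\<xi> < x + h" "y < \<eta>" "\<eta> < y + h"
    "f (x + h, y + h) - f (x + h, y) - f (x, y + h) + f (x, y) = h * h * d_phi (d_theta f) (\<xi>, \<eta>)"
proof -
  have f2: "Ck (Suc (Suc 0)) Q f" using f by (simp only: numeral_2_eq_2)
  have diff0: "z \<in> Q \<Longrightarrow> f differentiable (at z)"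
    and diff1: "z \<in> Q \<Longrightarrow> d_theta f differentiable (at z)" for z
    using f2 Ck_d_theta[OF f2] by auto
  have dA: "DERIV (\<lambda>t. f (t, y + h) - f (t, y)) t :> d_theta f (t, y + h) - d_theta f (t, y)"
    if "x \<le> t" "t \<le> x + h" for t
    using that h by (intro DERIV_diff has_real_derivative_d_theta diff0 box) auto
  obtain \<xi> where \<xi>: "x < \<xi>" "\<xi> < x + h"
    "f (x + h, y + h) - f (x + h, y) - (f (x, y + h) - f (x, y))
      = h * (d_theta f (\<xi>, y + h) - d_theta f (\<xi>, y))"
    using MVT2[of x "x + h" _ "\<lambda>t. d_theta f (t, y + h) - d_theta f (t, y)", OF _ dA] h by auto
  have dB: "DERIV (\<lambda>s. d_theta f (\<xi>, s)) s :> d_phi (d_theta f) (\<xi>, s)" if "y \<le> s" "s \<le> y + h" for s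
    using that \<xi> by (intro has_real_derivative_d_phi diff1 box) auto
  obtain \<eta> where "y < \<eta>" "\<eta> < y + h"
    "d_theta f (\<xi>, y + h) - d_theta f (\<xi>, y) = h * d_phi (d_theta f) (\<xi>, \<eta>)"
    using MVT2[of y "y + h" _ "\<lambda>s. d_phi (d_theta f) (\<xi>, s)", OF _ dB] h by auto
  with \<xi> that show ?thesis by (simp add: algebra_simps)
qed

lemma second_difference_d_theta_d_phi:
  assumes f: "Ck 2 Q f" and h: "h > 0"
    and box: "\<And>a b. x \<le> a \<Longrightarrow> a \<le> x + h \<Longrightarrow> y \<le> b \<Longrightarrow> b \<le> y + h \<Longrightarrow> (a, b) \<in> Q"
  obtains \<xi> \<eta> where "x < \<xi>" "\<xi> < x + h" "y < \<eta>" "\<eta> < y + h"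
    "f (x + h, y + h) - f (x + h, y) - f (x, y + h) + f (x, y) = h * h * d_theta (d_phi f) (\<xi>, \<eta>)"
proof -
  have f2: "Ck (Suc (Suc 0)) Q f" using f by (simp only: numeral_2_eq_2)
  have diff0: "z \<in> Q \<Longrightarrow> f differentiable (at z)"
    and diff1: "z \<in> Q \<Longrightarrow> d_phi f differentiable (at z)" for z
    using f2 Ck_d_phi[OF f2] by auto
  have dA: "DERIV (\<lambda>s. f (x + h, s) - f (x, s)) s :> d_phi f (x + h, s) - d_phi f (x, s)"
    if "y \<le> s" "s \<le> y + h" for s
    using that h by (intro DERIV_diff has_real_derivative_d_phi diff0 box) auto
  obtain \<eta> where \<eta>: "y < \<eta>" "\<eta> < y + h"
    "f (x + h, y + h) - f (x, y + h) - (f (x + h, y) - f (x, y)) = h * (d_phi f (x + h, \<eta>) - d_phi f (x, \<eta>))"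
    using MVT2[of y "y + h" _ "\<lambda>s. d_phi f (x + h, s) - d_phi f (x, s)", OF _ dA] h by auto
  have dB: "DERIV (\<lambda>t. d_phi f (t, \<eta>)) t :> d_theta (d_phi f) (t, \<eta>)" if "x \<le> t" "t \<le> x + h" for t
    using that \<eta> by (intro has_real_derivative_d_theta diff1 box) auto
  obtain \<xi> where "x < \<xi>" "\<xi> < x + h"
    "d_phi f (x + h, \<eta>) - d_phi f (x, \<eta>) = h * d_theta (d_phi f) (\<xi>, \<eta>)"
    using MVT2[of x "x + h" _ "\<lambda>t. d_theta (d_phi f) (t, \<eta>)", OF _ dB] h by auto
  with \<eta> that show ?thesis by (simp add: algebra_simps)
qed

lemma dist_Pair_lt_box:
  fixes a b x y h :: real
  assumes "h > 0" "x \<le> a" "a \<le> x + h" "y \<le> b" "b \<le> y + h"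
  shows "dist (a, b) (x, y) < 2 * h"
proof -
  have "dist (a, b) (x, y) = sqrt ((a - x)^2 + (b - y)^2)"
    by (simp add: dist_Pair_Pair dist_real_def)
  also have "\<dots> \<le> sqrt (h^2 + h^2)"
    using assms by (intro real_sqrt_le_mono add_mono power_mono) auto
  also have "\<dots> < 2 * h"
    using assms(1) by (intro real_less_lsqrt) (auto simp: power2_eq_square)
  finally show ?thesis .
qed

lemma d_phi_d_theta_commute:
  assumes Q: "open Q" and f: "Ck 2 Q f" and q: "q \<in> Q"
  shows "d_phi (d_theta f) q = d_theta (d_phi f) q"
proof (rule ccontr)
  assume "d_phi (d_theta f) q \<noteq> d_theta (d_phi f) q"
  then have d: "\<bar>d_phi (d_theta f) q - d_theta (d_phi f) q\<bar> / 2 > 0" (is "?d > 0") by simp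
  have f2: "Ck (Suc (Suc 0)) Q f" using f by (simp only: numeral_2_eq_2)
  have "continuous_on Q (d_phi (d_theta f))" "continuous_on Q (d_theta (d_phi f))"
    using Ck_imp_continuous_on Ck_d_phi Ck_d_theta f2 by blast+
  then obtain e1 e2 where e1: "e1 > 0" "\<And>z. z \<in> Q \<Longrightarrow> dist z q < e1 \<Longrightarrow>
        dist (d_phi (d_theta f) z) (d_phi (d_theta f) q) < ?d"
    and e2: "e2 > 0" "\<And>z. z \<in> Q \<Longrightarrow> dist z q < e2 \<Longrightarrow>
        dist (d_theta (d_phi f) z) (d_theta (d_phi f) q) < ?d"
    using q d unfolding continuous_on_iff by metis
  obtain e3 where e3: "e3 > 0" "ball q e3 \<subseteq> Q" using Q q open_contains_ball by blast
  define h where "h = min e1 (min e2 e3) / 2"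
  have h: "h > 0" using e1 e2 e3 by (simp add: h_def)
  have near: "z \<in> Q" "dist z q < e1" "dist z q < e2" if "dist z q < 2 * h" for z
    using that e3(2) by (auto simp: h_def dist_commute)
  obtain x y where qxy: "q = (x, y)" by (cases q)
  have box: "(a, b) \<in> Q" if "x \<le> a" "a \<le> x + h" "y \<le> b" "b \<le> y + h" for a b
    using near(1) dist_Pair_lt_box[OF h that] qxy by simp
  obtain \<xi> \<eta> where \<xi>\<eta>: "x < \<xi>" "\<xi> < x + h" "y < \<eta>" "\<eta> < y + h"
    and D: "f (x + h, y + h) - f (x + h, y) - f (x, y + h) + f (x, y) = h * h * d_phi (d_theta f) (\<xi>, \<eta>)"
    by (rule second_difference_d_phi_d_theta[OF f h box])
  obtain \<xi>' \<eta>' where \<xi>\<eta>': "x < \<xi>'" "\<xi>' < x + h" "y < \<eta>'" "\<eta>' < y + h"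
    and D': "f (x + h, y + h) - f (x + h, y) - f (x, y + h) + f (x, y) = h * h * d_theta (d_phi f) (\<xi>', \<eta>')"
    by (rule second_difference_d_theta_d_phi[OF f h box])
  have p: "dist (\<xi>, \<eta>) q < 2 * h" and p': "dist (\<xi>', \<eta>') q < 2 * h"
    using dist_Pair_lt_box[OF h] \<xi>\<eta> \<xi>\<eta>' qxy by auto
  have "d_phi (d_theta f) (\<xi>, \<eta>) = d_theta (d_phi f) (\<xi>', \<eta>')"
    using D D' h by simp
  moreover have "dist (d_phi (d_theta f) (\<xi>, \<eta>)) (d_phi (d_theta f) q) < ?d"
    and "dist (d_theta (d_phi f) (\<xi>', \<eta>')) (d_theta (d_phi f) q) < ?d"
    using e1(2)[OF near(1,2)[OF p]] e2(2)[OF near(1,3)[OF p']] by simp_all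
  ultimately show False
    unfolding dist_real_def by (simp add: abs_if split: if_splits)
qed

lemma Cinf_d_theta_d_phi: "open Q \<Longrightarrow> Cinf_on Q f \<Longrightarrow> q \<in> Q \<Longrightarrow> d_theta (d_phi f) q = d_phi (d_theta f) q"
  using d_phi_d_theta_commute[OF _ Cinf_imp_Ck] by metis

lemma Cinf_d_theta_d_phi_d_theta:
  "open Q \<Longrightarrow> Cinf_on Q f \<Longrightarrow> q \<in> Q \<Longrightarrow> d_theta (d_phi (d_theta f)) q = d_phi (d_theta (d_theta f)) q"
  using Cinf_d_theta_d_phi[of Q "d_theta f"] Cinf_d_theta by metis

lemma Cinf_d_theta_d_phi_d_phi:
  assumes Q: "open Q" and f: "Cinf_on Q f" and q: "q \<in> Q"
  shows "d_theta (d_phi (d_phi f)) q = d_phi (d_phi (d_theta f)) q"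
proof -
  have "d_theta (d_phi (d_phi f)) q = d_phi (d_theta (d_phi f)) q"
    using Cinf_d_theta_d_phi[OF Q Cinf_d_phi[OF f] q] .
  also have "\<dots> = d_phi (d_phi (d_theta f)) q"
    by (rule d_phi_cong[OF Q q])
       (use Cinf_d_theta_d_phi[OF Q f] Cinf_imp_differentiable[OF Cinf_d_phi[OF Cinf_d_theta[OF f]] q] in auto)
  finally show ?thesis .
qed

lemma Cinf_jets_has_real_derivative_theta:
  assumes Q: "open Q" and g: "Cinf_on Q g" and q: "(t, y) \<in> Q"
  shows "((\<lambda>t. g (t, y)) has_real_derivative d_theta g (t, y)) (at t)"
    "((\<lambda>t. d_theta g (t, y)) has_real_derivative d_theta (d_theta g) (t, y)) (at t)"
    "((\<lambda>t. d_phi g (t, y)) has_real_derivative d_phi (d_theta g) (t, y)) (at t)"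
    "((\<lambda>t. d_theta (d_theta g) (t, y)) has_real_derivative d_theta (d_theta (d_theta g)) (t, y)) (at t)"
    "((\<lambda>t. d_phi (d_theta g) (t, y)) has_real_derivative d_phi (d_theta (d_theta g)) (t, y)) (at t)"
    "((\<lambda>t. d_phi (d_phi g) (t, y)) has_real_derivative d_phi (d_phi (d_theta g)) (t, y)) (at t)"
  using Cinf_has_real_derivative_d_theta[OF g q]
    Cinf_has_real_derivative_d_theta[OF Cinf_d_theta[OF g] q]
    Cinf_has_real_derivative_d_theta[OF Cinf_d_phi[OF g] q]
    Cinf_has_real_derivative_d_theta[OF Cinf_d_theta[OF Cinf_d_theta[OF g]] q]
    Cinf_has_real_derivative_d_theta[OF Cinf_d_phi[OF Cinf_d_theta[OF g]] q]
    Cinf_has_real_derivative_d_theta[OF Cinf_d_phi[OF Cinf_d_phi[OF g]] q]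
    Cinf_d_theta_d_phi[OF Q g q] Cinf_d_theta_d_phi_d_theta[OF Q g q] Cinf_d_theta_d_phi_d_phi[OF Q g q]
  by simp_all

lemma Cinf_jets_has_real_derivative_phi:
  assumes g: "Cinf_on Q g" and q: "(t, y) \<in> Q"
  shows "((\<lambda>y. g (t, y)) has_real_derivative d_phi g (t, y)) (at y)"
    "((\<lambda>y. d_theta g (t, y)) has_real_derivative d_phi (d_theta g) (t, y)) (at y)"
    "((\<lambda>y. d_phi g (t, y)) has_real_derivative d_phi (d_phi g) (t, y)) (at y)"
    "((\<lambda>y. d_theta (d_theta g) (t, y)) has_real_derivative d_phi (d_theta (d_theta g)) (t, y)) (at y)"
    "((\<lambda>y. d_phi (d_theta g) (t, y)) has_real_derivative d_phi (d_phi (d_theta g)) (t, y)) (at y)"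
    "((\<lambda>y. d_phi (d_phi g) (t, y)) has_real_derivative d_phi (d_phi (d_phi g)) (t, y)) (at y)"
  by (rule Cinf_has_real_derivative_d_phi[OF _ q], (intro Cinf_d_theta Cinf_d_phi g)?)+

section \<open>Spherical coordinates and the orthonormal frame\<close>

definition e_theta :: "real \<times> real \<Rightarrow> real^3" where
  "e_theta q = vector [cos (fst q) * cos (snd q), cos (fst q) * sin (snd q), - sin (fst q)]"
definition e_phi :: "real \<times> real \<Rightarrow> real^3" where
  "e_phi q = vector [- sin (snd q), cos (snd q), 0]"

lemma vec3_eq_iff: "(x::real^3) = y \<longleftrightarrow> x$1 = y$1 \<and> x$2 = y$2 \<and> x$3 = y$3"
  by (simp add: vec_eq_iff forall_3)

lemma inner_vec3: "(x::real^3) \<bullet> y = x$1 * y$1 + x$2 * y$2 + x$3 * y$3"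
  by (simp add: inner_vec_def sum_3)

lemma vector3_eq_axis: "(vector [a, b, c] :: real^3) = a *\<^sub>R axis 1 1 + b *\<^sub>R axis 2 1 + c *\<^sub>R axis 3 1"
  by (simp add: vec3_eq_iff axis_def)

lemma has_derivative_vector3:
  assumes "(f1 has_derivative f1') F" "(f2 has_derivative f2') F" "(f3 has_derivative f3') F"
  shows "((\<lambda>x. vector [f1 x, f2 x, f3 x] :: real^3) has_derivative (\<lambda>h. vector [f1' h, f2' h, f3' h])) F"
  unfolding vector3_eq_axis
  by (intro has_derivative_add has_derivative_scaleR_left assms)

lemma sph_par_nth [simp]:
  "sph_par q $ 1 = sin (fst q) * cos (snd q)"
  "sph_par q $ 2 = sin (fst q) * sin (snd q)"
  "sph_par q $ 3 = cos (fst q)"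
  by (simp_all add: sph_par_def)

lemma e_theta_nth [simp]:
  "e_theta q $ 1 = cos (fst q) * cos (snd q)"
  "e_theta q $ 2 = cos (fst q) * sin (snd q)"
  "e_theta q $ 3 = - sin (fst q)"
  by (simp_all add: e_theta_def)

lemma e_phi_nth [simp]:
  "e_phi q $ 1 = - sin (snd q)"
  "e_phi q $ 2 = cos (snd q)"
  "e_phi q $ 3 = 0"
  by (simp_all add: e_phi_def)

lemma sph_frame_inner [simp]:
  "sph_par q \<bullet> sph_par q = 1" "e_theta q \<bullet> e_theta q = 1" "e_phi q \<bullet> e_phi q = 1"
  "sph_par q \<bullet> e_theta q = 0" "e_theta q \<bullet> sph_par q = 0"
  "sph_par q \<bullet> e_phi q = 0" "e_phi q \<bullet> sph_par q = 0"
  "e_theta q \<bullet> e_phi q = 0" "e_phi q \<bullet> e_theta q = 0"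
proof -
  obtain t y where q: "q = (t, y)" by (cases q)
  have "cos t * cos t + sin t * sin t = 1" "cos y * cos y + sin y * sin y = 1"
    by (rule sin_cos_squared_add3)+
  then show "sph_par q \<bullet> sph_par q = 1" "e_theta q \<bullet> e_theta q = 1" "e_phi q \<bullet> e_phi q = 1"
    "sph_par q \<bullet> e_theta q = 0" "e_theta q \<bullet> sph_par q = 0"
    "sph_par q \<bullet> e_phi q = 0" "e_phi q \<bullet> sph_par q = 0"
    "e_theta q \<bullet> e_phi q = 0" "e_phi q \<bullet> e_theta q = 0"
    unfolding inner_vec3 q by (simp; algebra)+
qed

lemma norm_sph_par [simp]: "norm (sph_par q) = 1"
  by (simp add: norm_eq_sqrt_inner)

lemma sph_par_nonzero [simp]: "sph_par q \<noteq> 0"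
  using norm_sph_par[of q] by (metis norm_zero zero_neq_one)

lemma sph_frame_expansion:
  "v = (v \<bullet> sph_par q) *\<^sub>R sph_par q + (v \<bullet> e_theta q) *\<^sub>R e_theta q + (v \<bullet> e_phi q) *\<^sub>R e_phi q"
proof -
  obtain t y where q: "q = (t, y)" by (cases q)
  have "cos t * cos t + sin t * sin t = 1" "cos y * cos y + sin y * sin y = 1"
    by (rule sin_cos_squared_add3)+
  then show ?thesis
    unfolding vec3_eq_iff inner_vec3 q by (simp; intro conjI; algebra)
qed

lemma sph_par_eq_vector: "sph_par q = vector [sin (fst q) * cos (snd q), sin (fst q) * sin (snd q), cos (fst q)]"
  by (simp add: sph_par_def)

lemma has_derivative_trig_fst_snd:
  fixes q :: "real \<times> real"
  shows "((\<lambda>x. sin (fst x)) has_derivative (\<lambda>h. fst h * cos (fst q))) (at q)"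
  "((\<lambda>x. cos (fst x)) has_derivative (\<lambda>h. fst h * - sin (fst q))) (at q)"
  "((\<lambda>x. sin (snd x)) has_derivative (\<lambda>h. snd h * cos (snd q))) (at q)"
  "((\<lambda>x. cos (snd x)) has_derivative (\<lambda>h. snd h * - sin (snd q))) (at q)"
proof -
  show "((\<lambda>x. sin (fst x)) has_derivative (\<lambda>h. fst h * cos (fst q))) (at q)"
    by (rule has_derivative_sin[OF bounded_linear_imp_has_derivative[OF bounded_linear_fst]])
  show "((\<lambda>x. cos (fst x)) has_derivative (\<lambda>h. fst h * - sin (fst q))) (at q)"
    by (rule has_derivative_cos[OF bounded_linear_imp_has_derivative[OF bounded_linear_fst]])
  show "((\<lambda>x. sin (snd x)) has_derivative (\<lambda>h. snd h * cos (snd q))) (at q)"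
    by (rule has_derivative_sin[OF bounded_linear_imp_has_derivative[OF bounded_linear_snd]])
  show "((\<lambda>x. cos (snd x)) has_derivative (\<lambda>h. snd h * - sin (snd q))) (at q)"
    by (rule has_derivative_cos[OF bounded_linear_imp_has_derivative[OF bounded_linear_snd]])
qed

lemma has_derivative_sph_par:
  "(sph_par has_derivative (\<lambda>d. fst d *\<^sub>R e_theta q + (snd d * sin (fst q)) *\<^sub>R e_phi q)) (at q)"
proof -
  have "((\<lambda>q. vector [sin (fst q) * cos (snd q), sin (fst q) * sin (snd q), cos (fst q)] :: real^3) has_derivative
     (\<lambda>d. vector [sin (fst q) * (snd d * - sin (snd q)) + fst d * cos (fst q) * cos (snd q),
                   sin (fst q) * (snd d * cos (snd q)) + fst d * cos (fst q) * sin (snd q),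
                   fst d * - sin (fst q)])) (at q)"
    by (intro has_derivative_vector3 has_derivative_mult has_derivative_trig_fst_snd)
  moreover have "(\<lambda>d. vector [sin (fst q) * (snd d * - sin (snd q)) + fst d * cos (fst q) * cos (snd q),
                   sin (fst q) * (snd d * cos (snd q)) + fst d * cos (fst q) * sin (snd q),
                   fst d * - sin (fst q)] :: real^3)
      = (\<lambda>d. fst d *\<^sub>R e_theta q + (snd d * sin (fst q)) *\<^sub>R e_phi q)"
    by (rule ext) (simp add: vec3_eq_iff algebra_simps)
  ultimately show ?thesis unfolding sph_par_eq_vector[abs_def] by simp
qed

lemma e_theta_eq_vector: "e_theta q = vector [cos (fst q) * cos (snd q), cos (fst q) * sin (snd q), - sin (fst q)]"
  by (simp add: e_theta_def)

lemma has_derivative_e_theta: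
  "(e_theta has_derivative (\<lambda>d. fst d *\<^sub>R (- sph_par q) + (snd d * cos (fst q)) *\<^sub>R e_phi q)) (at q)"
proof -
  have "((\<lambda>q. vector [cos (fst q) * cos (snd q), cos (fst q) * sin (snd q), - sin (fst q)] :: real^3) has_derivative
     (\<lambda>d. vector [cos (fst q) * (snd d * - sin (snd q)) + fst d * - sin (fst q) * cos (snd q),
                   cos (fst q) * (snd d * cos (snd q)) + fst d * - sin (fst q) * sin (snd q),
                   - (fst d * cos (fst q))])) (at q)"
    by (intro has_derivative_vector3 has_derivative_mult has_derivative_minus has_derivative_trig_fst_snd)
  moreover have "(\<lambda>d. vector [cos (fst q) * (snd d * - sin (snd q)) + fst d * - sin (fst q) * cos (snd q),
                   cos (fst q) * (snd d * cos (snd q)) + fst d * - sin (fst q) * sin (snd q),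
                   - (fst d * cos (fst q))] :: real^3)
      = (\<lambda>d. fst d *\<^sub>R (- sph_par q) + (snd d * cos (fst q)) *\<^sub>R e_phi q)"
    by (rule ext) (simp add: vec3_eq_iff algebra_simps)
  ultimately show ?thesis unfolding e_theta_eq_vector[abs_def] by simp
qed

lemma e_phi_eq_vector: "e_phi q = vector [- sin (snd q), cos (snd q), 0]"
  by (simp add: e_phi_def)

lemma has_derivative_e_phi:
  "(e_phi has_derivative (\<lambda>d. (- snd d) *\<^sub>R (sin (fst q) *\<^sub>R sph_par q + cos (fst q) *\<^sub>R e_theta q))) (at q)"
proof -
  have h1: "((\<lambda>q. vector [- sin (snd q), cos (snd q), 0] :: real^3) has_derivative
     (\<lambda>d. vector [- (snd d * cos (snd q)), snd d * - sin (snd q), 0])) (at q)"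
    by (intro has_derivative_vector3 has_derivative_minus has_derivative_const has_derivative_trig_fst_snd)
  have h2: "(\<lambda>d. vector [- (snd d * cos (snd q)), snd d * - sin (snd q), 0] :: real^3)
      = (\<lambda>d. (- snd d) *\<^sub>R (sin (fst q) *\<^sub>R sph_par q + cos (fst q) *\<^sub>R e_theta q))"
  proof -
    have "(vector [- (snd d * cos (snd q)), snd d * - sin (snd q), 0] :: real^3)
      = (- snd d) *\<^sub>R (sin (fst q) *\<^sub>R sph_par q + cos (fst q) *\<^sub>R e_theta q)" for d
      using sin_cos_squared_add3[of "fst q"] unfolding vec3_eq_iff by (simp; algebra)
    then show ?thesis by (rule ext)
  qed
  show ?thesis unfolding e_phi_eq_vector[abs_def] using h1 unfolding h2 .
qed

lemma Basis_vec3_cases: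
  "i \<in> (Basis :: (real^3) set) \<Longrightarrow> i = axis 1 1 \<or> i = axis 2 1 \<or> i = axis 3 1"
  by (auto simp: Basis_vec_def) (metis exhaust_3)

lemma Ck_vec3:
  fixes m :: "'a::real_normed_vector \<Rightarrow> real^3"
  assumes "open T" "Ck n T (\<lambda>x. m x $ 1)" "Ck n T (\<lambda>x. m x $ 2)" "Ck n T (\<lambda>x. m x $ 3)"
  shows "Ck n T m"
proof (rule Ck_componentwise[OF assms(1)])
  fix i :: "real^3" assume "i \<in> Basis"
  have e: "(\<lambda>x. m x \<bullet> axis k 1) = (\<lambda>x. m x $ k)" for k by (simp add: cart_eq_inner_axis)
  from Basis_vec3_cases[OF \<open>i \<in> Basis\<close>] show "Ck n T (\<lambda>x. m x \<bullet> i)"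
  proof (elim disjE)
    assume "i = axis 1 1" then show ?thesis using assms(2) e[of 1] by simp
  next
    assume "i = axis 2 1" then show ?thesis using assms(3) e[of 2] by simp
  next
    assume "i = axis 3 1" then show ?thesis using assms(4) e[of 3] by simp
  qed
qed

lemma Ck_trig:
  fixes S :: "(real \<times> real) set"
  assumes "open S"
  shows "Ck n S (\<lambda>q. sin (fst q))" "Ck n S (\<lambda>q. cos (fst q))"
    "Ck n S (\<lambda>q. sin (snd q))" "Ck n S (\<lambda>q. cos (snd q))"
  using Ck_sin_cos[OF bounded_linear_fst assms] Ck_sin_cos[OF bounded_linear_snd assms] by auto

lemma Ck_sph_par: "open S \<Longrightarrow> Ck n S sph_par"
  by (rule Ck_vec3) (auto intro!: Ck_mult Ck_trig)

lemma Ck_e_theta: "open S \<Longrightarrow> Ck n S e_theta"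
proof (rule Ck_vec3)
  assume S: "open S"
  have "Ck n S (\<lambda>q. (-1) * sin (fst q))" by (intro Ck_mult Ck_trig Ck_const S)
  then show "Ck n S (\<lambda>x. e_theta x $ 3)" by simp
qed (auto intro!: Ck_mult Ck_trig)

lemma Ck_e_phi: "open S \<Longrightarrow> Ck n S e_phi"
proof (rule Ck_vec3)
  assume S: "open S"
  have "Ck n S (\<lambda>q. (-1) * sin (snd q))" by (intro Ck_mult Ck_trig Ck_const S)
  then show "Ck n S (\<lambda>x. e_phi x $ 1)" by simp
qed (auto intro!: Ck_mult Ck_trig Ck_const)

lemma continuous_on_sph_frame: "continuous_on S sph_par" "continuous_on S e_theta" "continuous_on S e_phi"
  using Ck_imp_continuous_on[OF Ck_sph_par] Ck_imp_continuous_on[OF Ck_e_theta]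
    Ck_imp_continuous_on[OF Ck_e_phi] continuous_on_subset open_UNIV subset_UNIV by metis+

section \<open>Intrinsic derivatives in the frame\<close>

lemma tproj_sph_par: "tproj (sph_par q) b = (b \<bullet> e_theta q) *\<^sub>R e_theta q + (b \<bullet> e_phi q) *\<^sub>R e_phi q"
  using arg_cong[OF sph_frame_expansion[of b q], of "\<lambda>z. z - (b \<bullet> sph_par q) *\<^sub>R sph_par q"]
  unfolding tproj_def by (simp add: algebra_simps)

lemma sum_Basis_inner_mult: "(\<Sum>b\<in>Basis. (b \<bullet> u) * (b \<bullet> (v::'a::euclidean_space))) = u \<bullet> v"
  by (simp add: euclidean_inner[of u v] inner_commute mult.commute)

lemma sum_tproj_bilinear:
  fixes B :: "real^3 \<Rightarrow> real^3 \<Rightarrow> real"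
  assumes B: "bilinear B"
  shows "(\<Sum>b\<in>Basis. B (tproj (sph_par q) b) (tproj (sph_par q) b))
    = B (e_theta q) (e_theta q) + B (e_phi q) (e_phi q)"
proof -
  define T P where "T = e_theta q" and "P = e_phi q"
  have e: "B (tproj (sph_par q) b) (tproj (sph_par q) b) = ((b \<bullet> T) * (b \<bullet> T)) * B T T
      + ((b \<bullet> T) * (b \<bullet> P)) * (B T P + B P T) + ((b \<bullet> P) * (b \<bullet> P)) * B P P" for b
    unfolding tproj_sph_par T_def[symmetric] P_def[symmetric]
    by (simp add: bilinear_ladd[OF B] bilinear_radd[OF B] bilinear_lmul[OF B] bilinear_rmul[OF B] algebra_simps)
  have "(\<Sum>b\<in>Basis. B (tproj (sph_par q) b) (tproj (sph_par q) b)) =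
     (\<Sum>b\<in>Basis. (b \<bullet> T) * (b \<bullet> T)) * B T T + (\<Sum>b\<in>Basis. (b \<bullet> T) * (b \<bullet> P)) * (B T P + B P T)
     + (\<Sum>b\<in>Basis. (b \<bullet> P) * (b \<bullet> P)) * B P P"
    unfolding e by (simp add: sum.distrib sum_distrib_right)
  also have "\<dots> = B T T + B P P" unfolding sum_Basis_inner_mult by (simp add: T_def P_def)
  finally show ?thesis by (simp add: T_def P_def)
qed

lemma bilinear_prod:
  fixes f g :: "'a::real_vector \<Rightarrow> real"
  assumes "linear f" "linear g"
  shows "bilinear (\<lambda>v w. f v * g w)"
  unfolding bilinear_def using assms
  by (auto intro!: linearI simp: linear_add linear_scale algebra_simps)

lemma sum_tproj_bilinear_products:
  fixes H K :: "real^3 \<Rightarrow> real^3 \<Rightarrow> real"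
  assumes H: "bilinear H" and K: "bilinear K"
  shows "(\<Sum>b\<in>Basis. \<Sum>c\<in>Basis.
      H (tproj (sph_par q) b) (tproj (sph_par q) c) * K (tproj (sph_par q) b) (tproj (sph_par q) c))
   = H (e_theta q) (e_theta q) * K (e_theta q) (e_theta q) + H (e_theta q) (e_phi q) * K (e_theta q) (e_phi q)
   + H (e_phi q) (e_theta q) * K (e_phi q) (e_theta q) + H (e_phi q) (e_phi q) * K (e_phi q) (e_phi q)"
proof -
  have lin: "linear (\<lambda>w. B v w)" "linear (\<lambda>v. B v w)" if "bilinear B"
    for B :: "real^3 \<Rightarrow> real^3 \<Rightarrow> real" and v w
    using that unfolding bilinear_def by auto
  have inner: "(\<Sum>c\<in>Basis. H v (tproj (sph_par q) c) * K v (tproj (sph_par q) c))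
     = H v (e_theta q) * K v (e_theta q) + H v (e_phi q) * K v (e_phi q)" for v
    by (rule sum_tproj_bilinear[OF bilinear_prod[OF lin(1)[OF H] lin(1)[OF K]]])
  have o1: "(\<Sum>b\<in>Basis. H (tproj (sph_par q) b) w * K (tproj (sph_par q) b) w)
     = H (e_theta q) w * K (e_theta q) w + H (e_phi q) w * K (e_phi q) w" for w
    by (rule sum_tproj_bilinear[OF bilinear_prod[OF lin(2)[OF H] lin(2)[OF K]]])
  show ?thesis unfolding inner by (simp add: sum.distrib o1)
qed

lemma bilinear_linear_inner:
  assumes "linear L"
  shows "bilinear (\<lambda>v w. L v \<bullet> (w::'a::real_inner))"
  unfolding bilinear_def using assms
  by (auto intro!: linearI simp: linear_add linear_scale inner_add_left inner_add_right)

lemma bilinear_inner: "bilinear (\<lambda>v w. (v::'a::real_inner) \<bullet> w)"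
  unfolding bilinear_def by (auto intro!: linearI simp: inner_add_left inner_add_right)

lemma fd_expand_Basis_real:
  fixes f :: "'a::euclidean_space \<Rightarrow> real"
  assumes "f differentiable (at x)"
  shows "fd f x v = (\<Sum>i\<in>Basis. (v \<bullet> i) * fd f x i)"
  using fd_expand_Basis[OF assms, of v] by (simp only: real_scaleR_def)

lemma Ck2_imp_differentiable: "Ck 2 S F \<Longrightarrow> x \<in> S \<Longrightarrow> F differentiable (at x)"
  by (simp add: numeral_2_eq_2)

lemma Ck2_imp_differentiable_fd: "Ck 2 S F \<Longrightarrow> x \<in> S \<Longrightarrow> (\<lambda>y. fd F y v) differentiable (at x)"
  by (simp add: numeral_2_eq_2)

lemma D2_fd: "D2 F x v = fd (\<lambda>y. fd F y v) x"
  by (rule ext) (simp add: D2_def)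

lemma D2_has_derivative:
  assumes "Ck 2 S F" "x \<in> S"
  shows "((\<lambda>y. fd F y v) has_derivative D2 F x v) (at x)"
  unfolding D2_fd using Ck2_imp_differentiable_fd[OF assms] by (rule fd_has_derivative)

lemma D2_expand_left:
  fixes F :: "'a::euclidean_space \<Rightarrow> real"
  assumes S: "open S" and F: "Ck 2 S F" and x: "x \<in> S"
  shows "D2 F x v w = (\<Sum>i\<in>Basis. (v \<bullet> i) * D2 F x i w)"
proof -
  have eq: "y \<in> S \<Longrightarrow> (\<Sum>i\<in>Basis. (v \<bullet> i) * fd F y i) = fd F y v" for y
    using fd_expand_Basis_real[OF Ck2_imp_differentiable[OF F], of y v] by simp
  have hd: "((\<lambda>y. \<Sum>i\<in>Basis. (v \<bullet> i) * fd F y i) has_derivative (\<lambda>w. \<Sum>i\<in>Basis. (v \<bullet> i) * D2 F x i w)) (at x)"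
    by (intro has_derivative_sum has_derivative_mult_right D2_has_derivative[OF F x])
  have "((\<lambda>y. fd F y v) has_derivative (\<lambda>w. \<Sum>i\<in>Basis. (v \<bullet> i) * D2 F x i w)) (at x)"
    by (rule has_derivative_transform_within_open[OF hd S x eq])
  then have "D2 F x v = (\<lambda>w. \<Sum>i\<in>Basis. (v \<bullet> i) * D2 F x i w)"
    unfolding D2_fd by (rule fd_eq)
  then show ?thesis by simp
qed

lemma D2_bilinear:
  fixes F :: "'a::euclidean_space \<Rightarrow> real"
  assumes S: "open S" and F: "Ck 2 S F" and x: "x \<in> S"
  shows "bilinear (D2 F x)"
  unfolding bilinear_def
proof (intro conjI allI)
  fix v show "linear (\<lambda>w. D2 F x v w)"
    using linear_fd[OF Ck2_imp_differentiable_fd[OF F x]] unfolding D2_fd by simp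
next
  fix w
  have e: "(\<lambda>v. D2 F x v w) = (\<lambda>v. \<Sum>i\<in>Basis. (v \<bullet> i) * D2 F x i w)"
    by (rule ext) (rule D2_expand_left[OF S F x])
  show "linear (\<lambda>v. D2 F x v w)"
    unfolding e
    by (rule linearI) (simp_all add: inner_add_left sum.distrib algebra_simps sum_distrib_left)
qed

lemma has_derivative_fd_comp_sph_par:
  fixes F :: "real^3 \<Rightarrow> real"
  assumes S: "open S" and F: "Ck 2 S F" and Q: "open Q" and QS: "\<And>q. q \<in> Q \<Longrightarrow> sph_par q \<in> S"
    and q: "q \<in> Q" and e: "(e has_derivative De) (at q)"
  shows "((\<lambda>q. fd F (sph_par q) (e q)) has_derivative (\<lambda>d. D2 F (sph_par q) (e q)
      (fst d *\<^sub>R e_theta q + (snd d * sin (fst q)) *\<^sub>R e_phi q) + fd F (sph_par q) (De d))) (at q)"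
proof -
  define Dp where "Dp = (\<lambda>d. fst d *\<^sub>R e_theta q + (snd d * sin (fst q)) *\<^sub>R e_phi q)"
  have pS: "sph_par q \<in> S" using QS q by auto
  have "((\<lambda>q. fd F (sph_par q) i) has_derivative (\<lambda>d. D2 F (sph_par q) i (Dp d))) (at q)" for i
    using diff_chain_at[OF has_derivative_sph_par D2_has_derivative[OF F pS, of i]] by (simp add: o_def Dp_def)
  moreover have "((\<lambda>q. e q \<bullet> i) has_derivative (\<lambda>d. De d \<bullet> i)) (at q)" for i
    by (rule bounded_linear.has_derivative[OF bounded_linear_inner_left e])
  ultimately have "((\<lambda>q. \<Sum>i\<in>Basis. (e q \<bullet> i) * fd F (sph_par q) i) has_derivative
      (\<lambda>d. \<Sum>i\<in>Basis. (e q \<bullet> i) * D2 F (sph_par q) i (Dp d) + (De d \<bullet> i) * fd F (sph_par q) i)) (at q)"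
    by (intro has_derivative_sum has_derivative_mult)
  moreover have "y \<in> Q \<Longrightarrow> (\<Sum>i\<in>Basis. (e y \<bullet> i) * fd F (sph_par y) i) = fd F (sph_par y) (e y)" for y
    using fd_expand_Basis_real[OF Ck2_imp_differentiable[OF F QS], of y "e y"] by simp
  ultimately have "((\<lambda>x. fd F (sph_par x) (e x)) has_derivative
      (\<lambda>d. \<Sum>i\<in>Basis. (e q \<bullet> i) * D2 F (sph_par q) i (Dp d) + (De d \<bullet> i) * fd F (sph_par q) i)) (at q)"
    by (rule has_derivative_transform_within_open[OF _ Q q]) auto
  moreover have "(\<lambda>d. \<Sum>i\<in>Basis. (e q \<bullet> i) * D2 F (sph_par q) i (Dp d) + (De d \<bullet> i) * fd F (sph_par q) i)
     = (\<lambda>d. D2 F (sph_par q) (e q) (Dp d) + fd F (sph_par q) (De d))"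
    by (simp only: sum.distrib D2_expand_left[OF S F pS, of "e q", symmetric]
        fd_expand_Basis_real[OF Ck2_imp_differentiable[OF F pS], symmetric])
  ultimately show ?thesis
    by (simp only: Dp_def)
qed

lemma has_derivative_comp_sph_par:
  fixes F :: "real^3 \<Rightarrow> real"
  assumes "F differentiable (at (sph_par q))"
  shows "((\<lambda>q. F (sph_par q)) has_derivative
    (\<lambda>d. fd F (sph_par q) (fst d *\<^sub>R e_theta q + (snd d * sin (fst q)) *\<^sub>R e_phi q))) (at q)"
  using diff_chain_at[OF has_derivative_sph_par fd_has_derivative[OF assms]] by (simp add: o_def)

lemma d_comp_sph_par:
  fixes F :: "real^3 \<Rightarrow> real"
  assumes "F differentiable (at (sph_par q))"
  shows "d_theta (\<lambda>q. F (sph_par q)) q = fd F (sph_par q) (e_theta q)"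
        "d_phi (\<lambda>q. F (sph_par q)) q = sin (fst q) * fd F (sph_par q) (e_phi q)"
proof -
  have l: "linear (fd F (sph_par q))" using assms by (rule linear_fd)
  note h = fd_eq[OF has_derivative_comp_sph_par[OF assms]]
  show "d_theta (\<lambda>q. F (sph_par q)) q = fd F (sph_par q) (e_theta q)" unfolding d_theta_def h by simp
  show "d_phi (\<lambda>q. F (sph_par q)) q = sin (fst q) * fd F (sph_par q) (e_phi q)" unfolding d_phi_def h
    by (simp add: linear_scale[OF l])
qed

lemma d2_comp_sph_par:
  fixes F :: "real^3 \<Rightarrow> real"
  assumes S: "open S" and F: "Ck 2 S F" and Q: "open Q" and QS: "\<And>q. q \<in> Q \<Longrightarrow> sph_par q \<in> S"
    and q: "q \<in> Q"
  shows "d_theta (d_theta (\<lambda>q. F (sph_par q))) q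
      = D2 F (sph_par q) (e_theta q) (e_theta q) - fd F (sph_par q) (sph_par q)"
    "d_phi (d_theta (\<lambda>q. F (sph_par q))) q
      = sin (fst q) * D2 F (sph_par q) (e_theta q) (e_phi q) + cos (fst q) * fd F (sph_par q) (e_phi q)"
    "d_theta (d_phi (\<lambda>q. F (sph_par q))) q
      = cos (fst q) * fd F (sph_par q) (e_phi q) + sin (fst q) * D2 F (sph_par q) (e_phi q) (e_theta q)"
    "d_phi (d_phi (\<lambda>q. F (sph_par q))) q
      = sin (fst q) * sin (fst q) * D2 F (sph_par q) (e_phi q) (e_phi q)
        - sin (fst q) * sin (fst q) * fd F (sph_par q) (sph_par q)
        - sin (fst q) * cos (fst q) * fd F (sph_par q) (e_theta q)"
proof -
  have pS: "sph_par q \<in> S" using QS q by auto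
  have B: "bilinear (D2 F (sph_par q))" by (rule D2_bilinear[OF S F pS])
  have L: "linear (fd F (sph_par q))" using linear_fd[OF Ck2_imp_differentiable[OF F pS]] .
  have dif: "y \<in> Q \<Longrightarrow> F differentiable (at (sph_par y))" for y using Ck2_imp_differentiable[OF F QS] by blast
  have gT: "y \<in> Q \<Longrightarrow> fd F (sph_par y) (e_theta y) = d_theta (\<lambda>q. F (sph_par q)) y" for y
    using d_comp_sph_par(1)[OF dif] by simp
  have gP: "y \<in> Q \<Longrightarrow> sin (fst y) * fd F (sph_par y) (e_phi y) = d_phi (\<lambda>q. F (sph_par q)) y" for y
    using d_comp_sph_par(2)[OF dif] by simp
  note hT = has_derivative_fd_comp_sph_par[OF S F Q QS q has_derivative_e_theta]
  note hP = has_derivative_mult[OF has_derivative_trig_fst_snd(1)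
      has_derivative_fd_comp_sph_par[OF S F Q QS q has_derivative_e_phi]]
  let ?T = "\<lambda>y. fd F (sph_par y) (e_theta y)" and ?P = "\<lambda>y. sin (fst y) * fd F (sph_par y) (e_phi y)"
  have "d_theta (d_theta (\<lambda>q. F (sph_par q))) q = d_theta ?T q"
    "d_phi (d_theta (\<lambda>q. F (sph_par q))) q = d_phi ?T q"
    "d_theta (d_phi (\<lambda>q. F (sph_par q))) q = d_theta ?P q"
    "d_phi (d_phi (\<lambda>q. F (sph_par q))) q = d_phi ?P q"
    by (rule d_theta_cong[OF Q q gT] d_phi_cong[OF Q q gT] d_theta_cong[OF Q q gP] d_phi_cong[OF Q q gP];
        simp add: differentiableI[OF hT] differentiableI[OF hP])+
  moreover have "d_theta ?T q = D2 F (sph_par q) (e_theta q) (e_theta q) - fd F (sph_par q) (sph_par q)"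
    "d_phi ?T q = sin (fst q) * D2 F (sph_par q) (e_theta q) (e_phi q) + cos (fst q) * fd F (sph_par q) (e_phi q)"
    unfolding d_theta_def d_phi_def using fd_eq[OF hT]
    by (simp_all add: linear_neg[OF L] linear_scale[OF L] bilinear_rmul[OF B])
  moreover have "d_theta ?P q
      = cos (fst q) * fd F (sph_par q) (e_phi q) + sin (fst q) * D2 F (sph_par q) (e_phi q) (e_theta q)"
    "d_phi ?P q = sin (fst q) * sin (fst q) * D2 F (sph_par q) (e_phi q) (e_phi q)
        - sin (fst q) * sin (fst q) * fd F (sph_par q) (sph_par q)
        - sin (fst q) * cos (fst q) * fd F (sph_par q) (e_theta q)"
    unfolding d_theta_def d_phi_def using fd_eq[OF hP]
    by (simp_all add: linear_0[OF L] linear_scale[OF L] linear_add[OF L] linear_neg[OF L]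
        linear_diff[OF L] bilinear_rmul[OF B] algebra_simps)
  ultimately show "d_theta (d_theta (\<lambda>q. F (sph_par q))) q
      = D2 F (sph_par q) (e_theta q) (e_theta q) - fd F (sph_par q) (sph_par q)"
    "d_phi (d_theta (\<lambda>q. F (sph_par q))) q
      = sin (fst q) * D2 F (sph_par q) (e_theta q) (e_phi q) + cos (fst q) * fd F (sph_par q) (e_phi q)"
    "d_theta (d_phi (\<lambda>q. F (sph_par q))) q
      = cos (fst q) * fd F (sph_par q) (e_phi q) + sin (fst q) * D2 F (sph_par q) (e_phi q) (e_theta q)"
    "d_phi (d_phi (\<lambda>q. F (sph_par q))) q
      = sin (fst q) * sin (fst q) * D2 F (sph_par q) (e_phi q) (e_phi q)
        - sin (fst q) * sin (fst q) * fd F (sph_par q) (sph_par q)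
        - sin (fst q) * cos (fst q) * fd F (sph_par q) (e_theta q)"
    by simp_all
qed

lemma jets_comp_sph_par:
  fixes F :: "real^3 \<Rightarrow> real"
  assumes S: "open S" and F: "Ck 2 S F" and Q: "open Q" and QS: "\<And>q. q \<in> Q \<Longrightarrow> sph_par q \<in> S"
    and q: "q \<in> Q" and radial: "fd F (sph_par q) (sph_par q) = 0"
  shows "d_theta (\<lambda>q. F (sph_par q)) q = fd F (sph_par q) (e_theta q)"
    "d_phi (\<lambda>q. F (sph_par q)) q = sin (fst q) * fd F (sph_par q) (e_phi q)"
    "d_theta (d_theta (\<lambda>q. F (sph_par q))) q = D2 F (sph_par q) (e_theta q) (e_theta q)"
    "d_phi (d_theta (\<lambda>q. F (sph_par q))) q
      = sin (fst q) * D2 F (sph_par q) (e_theta q) (e_phi q) + cos (fst q) * fd F (sph_par q) (e_phi q)"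
    "d_theta (d_phi (\<lambda>q. F (sph_par q))) q
      = cos (fst q) * fd F (sph_par q) (e_phi q) + sin (fst q) * D2 F (sph_par q) (e_phi q) (e_theta q)"
    "d_phi (d_phi (\<lambda>q. F (sph_par q))) q
      = sin (fst q) * sin (fst q) * D2 F (sph_par q) (e_phi q) (e_phi q)
        - sin (fst q) * cos (fst q) * fd F (sph_par q) (e_theta q)"
  using d_comp_sph_par[OF Ck2_imp_differentiable[OF F QS[OF q]]] d2_comp_sph_par[OF S F Q QS q] radial by simp_all

lemma sph_lap_sph_par:
  assumes "bilinear (D2 (hext u) (sph_par q))"
  shows "sph_lap u (sph_par q)
    = D2 (hext u) (sph_par q) (e_theta q) (e_theta q) + D2 (hext u) (sph_par q) (e_phi q) (e_phi q)"
  unfolding sph_lap_def sph_hess_def by (rule sum_tproj_bilinear[OF assms])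

lemma sph_hess_sq_sph_par:
  assumes "bilinear (D2 (hext u) (sph_par q))"
  shows "sph_hess_sq u (sph_par q)
    = (D2 (hext u) (sph_par q) (e_theta q) (e_theta q))^2 + (D2 (hext u) (sph_par q) (e_theta q) (e_phi q))^2
      + (D2 (hext u) (sph_par q) (e_phi q) (e_theta q))^2 + (D2 (hext u) (sph_par q) (e_phi q) (e_phi q))^2"
  unfolding sph_hess_sq_def sph_hess_def power2_eq_square by (rule sum_tproj_bilinear_products[OF assms assms])

lemma sph_hess_pair_sph_par:
  assumes f: "bilinear (D2 (hext f) (sph_par q))" and u: "bilinear (D2 (hext u) (sph_par q))"
  defines "Hf v w \<equiv> D2 (hext f) (sph_par q) (v q) (w q)" and "Hu v w \<equiv> D2 (hext u) (sph_par q) (v q) (w q)"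
  shows "sph_hess_pair f u (sph_par q)
    = Hf e_theta e_theta * (Hu e_theta e_theta - (Hu e_theta e_theta + Hu e_phi e_phi) / 2)
      + Hf e_theta e_phi * Hu e_theta e_phi + Hf e_phi e_theta * Hu e_phi e_theta
      + Hf e_phi e_phi * (Hu e_phi e_phi - (Hu e_theta e_theta + Hu e_phi e_phi) / 2)"
proof -
  let ?t = "tproj (sph_par q)"
  have "sph_hess_pair f u (sph_par q)
      = (\<Sum>b\<in>Basis. \<Sum>c\<in>Basis. D2 (hext f) (sph_par q) (?t b) (?t c) * D2 (hext u) (sph_par q) (?t b) (?t c))
        - sph_lap u (sph_par q) / 2 * (\<Sum>b\<in>Basis. \<Sum>c\<in>Basis. D2 (hext f) (sph_par q) (?t b) (?t c) * (?t b \<bullet> ?t c))"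
    unfolding sph_hess_pair_def sph_hess_def
    by (simp add: right_diff_distrib sum_subtractf sum_distrib_left algebra_simps)
  then show ?thesis
    using sum_tproj_bilinear_products[OF f u, of q] sum_tproj_bilinear_products[OF f bilinear_inner, of q]
      sph_lap_sph_par[OF u]
    by (simp add: Hf_def Hu_def field_simps)
qed

lemma frame_derivatives_from_jets:
  fixes F :: "real^3 \<Rightarrow> real"
  assumes S: "open S" and F: "Cinf_on S F" and Q: "open Q" and QS: "\<And>q. q \<in> Q \<Longrightarrow> sph_par q \<in> S"
    and q: "q \<in> Q" and radial: "fd F (sph_par q) (sph_par q) = 0" and s: "sin (fst q) \<noteq> 0"
  defines "G \<equiv> \<lambda>q. F (sph_par q)"
  shows "fd F (sph_par q) (e_theta q) = d_theta G q"
    "fd F (sph_par q) (e_phi q) = d_phi G q / sin (fst q)"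
    "D2 F (sph_par q) (e_theta q) (e_theta q) = d_theta (d_theta G) q"
    "D2 F (sph_par q) (e_theta q) (e_phi q)
      = (d_phi (d_theta G) q - cos (fst q) * (d_phi G q / sin (fst q))) / sin (fst q)"
    "D2 F (sph_par q) (e_phi q) (e_theta q)
      = (d_phi (d_theta G) q - cos (fst q) * (d_phi G q / sin (fst q))) / sin (fst q)"
    "D2 F (sph_par q) (e_phi q) (e_phi q)
      = (d_phi (d_phi G) q + sin (fst q) * cos (fst q) * d_theta G q) / (sin (fst q) * sin (fst q))"
proof -
  have G: "Cinf_on Q G"
    unfolding G_def Cinf_on_def using QS by (intro allI Ck_comp[OF S Q _ Cinf_imp_Ck[OF F] Ck_sph_par[OF Q]]) auto
  note J = jets_comp_sph_par[OF S Cinf_imp_Ck[OF F] Q QS q radial, folded G_def]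
  have e: "fd F (sph_par q) (e_phi q) = d_phi G q / sin (fst q)" using J(2) s by simp
  show "fd F (sph_par q) (e_theta q) = d_theta G q" "fd F (sph_par q) (e_phi q) = d_phi G q / sin (fst q)"
    "D2 F (sph_par q) (e_theta q) (e_theta q) = d_theta (d_theta G) q"
    using J(1,3) e by simp_all
  show "D2 F (sph_par q) (e_theta q) (e_phi q)
      = (d_phi (d_theta G) q - cos (fst q) * (d_phi G q / sin (fst q))) / sin (fst q)"
    using J(4) s unfolding e[symmetric] by (simp add: field_simps)
  show "D2 F (sph_par q) (e_phi q) (e_theta q)
      = (d_phi (d_theta G) q - cos (fst q) * (d_phi G q / sin (fst q))) / sin (fst q)"
    using J(5) s Cinf_d_theta_d_phi[OF Q G q] unfolding e[symmetric] by (simp add: field_simps)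
  show "D2 F (sph_par q) (e_phi q) (e_phi q)
      = (d_phi (d_phi G) q + sin (fst q) * cos (fst q) * d_theta G q) / (sin (fst q) * sin (fst q))"
    using J(6) J(1) s by (simp add: field_simps)
qed

lemma D2_locally_zero:
  assumes "open S" "y \<in> S" "\<And>z. z \<in> S \<Longrightarrow> f z = 0"
  shows "D2 f y v w = 0"
proof -
  have "z \<in> S \<Longrightarrow> fd f z v = 0" for z
    using fd_locally_zero[OF assms(1) _ assms(3)] by simp
  then show ?thesis
    unfolding D2_def using fd_locally_zero[OF assms(1,2), of "\<lambda>z. fd f z v"] by simp
qed

lemma D2_expand:
  fixes F :: "'a::euclidean_space \<Rightarrow> real"
  assumes S: "open S" and F: "Cinf_on S F" and y: "y \<in> S"
  shows "D2 F y v w = (\<Sum>i\<in>Basis. \<Sum>j\<in>Basis. (v \<bullet> i) * (w \<bullet> j) * D2 F y i j)"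
proof -
  have F2: "Ck 2 S F" using F by (rule Cinf_imp_Ck)
  have "D2 F y v w = (\<Sum>i\<in>Basis. (v \<bullet> i) * D2 F y i w)" by (rule D2_expand_left[OF S F2 y])
  also have "\<dots> = (\<Sum>i\<in>Basis. (v \<bullet> i) * (\<Sum>j\<in>Basis. (w \<bullet> j) * D2 F y i j))"
  proof -
    have "D2 F y i w = (\<Sum>j\<in>Basis. (w \<bullet> j) * D2 F y i j)" for i
      unfolding D2_fd by (rule fd_expand_Basis_real[OF Ck2_imp_differentiable_fd[OF F2 y]])
    then show ?thesis by simp
  qed
  finally show ?thesis by (simp add: sum_distrib_left mult.assoc)
qed

lemma continuous_on_D2_comp_sph_par:
  fixes F :: "real^3 \<Rightarrow> real"
  assumes S: "open S" and F: "Cinf_on S F" and QS: "sph_par ` Q \<subseteq> S"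
    and e1: "continuous_on Q e1" and e2: "continuous_on Q e2"
  shows "continuous_on Q (\<lambda>q. D2 F (sph_par q) (e1 q) (e2 q))"
proof -
  have ij: "continuous_on S (\<lambda>y. D2 F y i j)" for i j
  proof -
    have "Cinf_on S (\<lambda>y. fd (\<lambda>y. fd F y i) y j)" by (intro Cinf_fd F)
    then show ?thesis unfolding D2_def by (rule Cinf_imp_continuous_on)
  qed
  have c: "continuous_on Q (\<lambda>q. \<Sum>i\<in>Basis. \<Sum>j\<in>Basis. (e1 q \<bullet> i) * (e2 q \<bullet> j) * D2 F (sph_par q) i j)"
    by (intro continuous_intros e1 e2 continuous_on_compose2[OF ij continuous_on_sph_frame(1) QS])
  show ?thesis
    by (rule continuous_on_cong[THEN iffD1, OF refl _ c]) (use D2_expand[OF S F] QS in auto)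
qed

lemma continuous_on_fd_comp_sph_par:
  fixes F :: "real^3 \<Rightarrow> real"
  assumes S: "open S" and F: "Cinf_on S F" and QS: "sph_par ` Q \<subseteq> S"
    and e1: "continuous_on Q e1"
  shows "continuous_on Q (\<lambda>q. fd F (sph_par q) (e1 q))"
proof -
  have ij: "continuous_on S (\<lambda>y. fd F y i)" for i
    using Cinf_imp_continuous_on[OF Cinf_fd[OF F]] by blast
  have c: "continuous_on Q (\<lambda>q. \<Sum>i\<in>Basis. (e1 q \<bullet> i) * fd F (sph_par q) i)"
    by (intro continuous_intros e1 continuous_on_compose2[OF ij continuous_on_sph_frame(1) QS])
  show ?thesis
  proof (rule continuous_on_cong[THEN iffD1, OF refl _ c])
    fix q assume "q \<in> Q"
    then have "sph_par q \<in> S" using QS by auto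
    then show "(\<Sum>i\<in>Basis. (e1 q \<bullet> i) * fd F (sph_par q) i) = fd F (sph_par q) (e1 q)"
      using fd_expand_Basis_real[OF Cinf_imp_differentiable[OF F], of "sph_par q" "e1 q"] by simp
  qed
qed

section \<open>The divergence identity in coordinates\<close>

text \<open>In the frame (e_theta, e_phi), with u1, u2 and H11 .. H22 the components of the gradient
  and Hessian of u, and v1, v2 those of the gradient of v = Y1, (flux1, flux2) are the components of
    W_A = 2 u (H_AB - Delta u sigma_AB / 2) nabla^B v - 2 v (H_AB - Delta u sigma_AB / 2) nabla^B u
          - u (Delta u + 2 u) nabla_A v + v (Delta u + 2 u) nabla_A u,
  whose divergence is defect_frame (the right-hand minus the left-hand integrand of the identity)
  minus u (Delta u + 2 u) (Delta + 2) v.\<close>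

definition flux1 ::
    "real \<Rightarrow> real \<Rightarrow> real \<Rightarrow> real \<Rightarrow> real \<Rightarrow>
     real \<Rightarrow> real \<Rightarrow> real \<Rightarrow> real \<Rightarrow> real" where
  "flux1 u u1 u2 H11 H12 H22 v v1 v2 =
     2 * u * ((H11 - H22) / 2 * v1 + H12 * v2) - 2 * v * ((H11 - H22) / 2 * u1 + H12 * u2)
     - (u * (H11 + H22) + 2 * u * u) * v1 + v * (H11 + H22 + 2 * u) * u1"

definition flux2 ::
    "real \<Rightarrow> real \<Rightarrow> real \<Rightarrow> real \<Rightarrow> real \<Rightarrow>
     real \<Rightarrow> real \<Rightarrow> real \<Rightarrow> real \<Rightarrow> real" where
  "flux2 u u1 u2 H11 H12 H22 v v1 v2 =
     2 * u * (H12 * v1 - (H11 - H22) / 2 * v2) - 2 * v * (H12 * u1 - (H11 - H22) / 2 * u2)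
     - (u * (H11 + H22) + 2 * u * u) * v2 + v * (H11 + H22 + 2 * u) * u2"

definition defect_frame ::
    "real \<Rightarrow> real \<Rightarrow> real \<Rightarrow> real \<Rightarrow> real \<Rightarrow>
     real \<Rightarrow> real \<Rightarrow> real \<Rightarrow> real \<Rightarrow> real \<Rightarrow> real" where
  "defect_frame u v H11 H12 H21 H22 K11 K12 K21 K22 =
     v * (H11 + H22 + 2 * u)^2
     + 2 * (u * (K11 * (H11 - (H11 + H22) / 2) + K12 * H12 + K21 * H21 + K22 * (H22 - (H11 + H22) / 2)))
     - v * (2 * (H11^2 + H12^2 + H21^2 + H22^2) - (H11 + H22)^2)"

text \<open>The theta-derivative of sin theta * flux1 and the phi-derivative of flux2, expressed through
  the coordinate derivatives u_ij, v_ij (i times by theta, j times by phi) of u and v, with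
  s = sin theta and c = cos theta.\<close>

definition flux1_d_theta ::
    "real \<Rightarrow> real \<Rightarrow> real \<Rightarrow> real \<Rightarrow> real \<Rightarrow> real \<Rightarrow> real \<Rightarrow> real \<Rightarrow>
     real \<Rightarrow> real \<Rightarrow> real \<Rightarrow> real \<Rightarrow> real \<Rightarrow> real \<Rightarrow> real \<Rightarrow> real \<Rightarrow> real" where
  "flux1_d_theta s c u00 u10 u01 u20 u11 u02 u30 u21 u12 v00 v10 v01 v20 v11 = (let r = inverse s in
       -2 * c * u00 * u01 * v11 * r^2 + 2 * c * u00 * u02 * v10 * r^2 + 2 * c * u00 * u10 * v00
       - 2 * c * u00 * u10 * v20 - 4 * c * u00 * u11 * v01 * r^2 - 2 * c * u00 * u20 * v10
       - 2 * c * u00^2 * v10 - 2 * c * u01 * u10 * v01 * r^2 + 6 * c * u01 * u11 * v00 * r^2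
       + 2 * c * u01^2 * v10 * r^2 - 2 * c * u02 * u10 * v00 * r^2 + 4 * c * u10 * u20 * v00
       + 4 * c^2 * u00 * u01 * v01 * r^3 - 4 * c^2 * u01^2 * v00 * r^3 + 2 * u00 * u01 * v01 * r
       - 2 * u00 * u02 * v20 * r + 2 * u00 * u11 * v11 * r - 2 * u00 * u12 * v10 * r
       + 2 * u00 * u20 * v00 * s + 2 * u00 * u21 * v01 * r - 2 * u00^2 * v20 * s
       - 2 * u01 * u11 * v10 * r - 2 * u01 * u21 * v00 * r - 2 * u01^2 * v00 * r
       + 2 * u02 * u20 * v00 * r + 2 * u10 * u11 * v01 * r + 2 * u10 * u12 * v00 * r
       - 2 * u11^2 * v00 * r)"

definition flux2_d_phi ::
    "real \<Rightarrow> real \<Rightarrow> real \<Rightarrow> real \<Rightarrow> real \<Rightarrow> real \<Rightarrow> real \<Rightarrow> real \<Rightarrow>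
     real \<Rightarrow> real \<Rightarrow> real \<Rightarrow> real \<Rightarrow> real \<Rightarrow> real \<Rightarrow> real \<Rightarrow> real \<Rightarrow> real" where
  "flux2_d_phi s c u00 u10 u01 u20 u11 u02 u21 u12 u03 v00 v10 v01 v11 v02 = (let r = inverse s in
       -2 * c * u00 * u01 * v11 * r^2 - 2 * c * u00 * u02 * v10 * r^2
       + 2 * c * u01 * u10 * v01 * r^2 + 2 * c * u01 * u11 * v00 * r^2
       - 2 * c * u01^2 * v10 * r^2 + 2 * c * u02 * u10 * v00 * r^2 - 2 * u00 * u01 * v01 * r
       + 2 * u00 * u02 * v00 * r + 2 * u00 * u11 * v11 * r + 2 * u00 * u12 * v10 * r
       - 2 * u00 * u20 * v02 * r - 2 * u00 * u21 * v01 * r - 2 * u00^2 * v02 * r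
       + 2 * u01 * u11 * v10 * r + 2 * u01 * u21 * v00 * r + 2 * u01^2 * v00 * r
       + 2 * u02 * u20 * v00 * r - 2 * u10 * u11 * v01 * r - 2 * u10 * u12 * v00 * r
       - 2 * u11^2 * v00 * r)"

lemma flux_derivatives_sum:
  fixes s c u00 u10 u01 u20 u11 u02 u30 u21 u12 u03 v00 v10 v01 v20 v11 v02 :: real
  assumes s: "s \<noteq> 0"
  shows "flux1_d_theta s c u00 u10 u01 u20 u11 u02 u30 u21 u12 v00 v10 v01 v20 v11
       + flux2_d_phi s c u00 u10 u01 u20 u11 u02 u21 u12 u03 v00 v10 v01 v11 v02
     = s * defect_frame u00 v00 u20 ((u11 - c * (u01 / s)) / s) ((u11 - c * (u01 / s)) / s)
           ((u02 + s * c * u10) / (s * s))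
           v20 ((v11 - c * (v01 / s)) / s) ((v11 - c * (v01 / s)) / s) ((v02 + s * c * v10) / (s * s))
       - s * (u00 * (u20 + (u02 + s * c * u10) / (s * s)) + 2 * u00 * u00)
           * (v20 + (v02 + s * c * v10) / (s * s) + 2 * v00)"
proof -
  obtain r where r: "inverse s = r" by blast
  have sr: "s * r = 1" using s r by auto
  have d: "x / s = x * r" for x using r by (simp add: divide_inverse)
  have d2: "x / (s * s) = x * r * r" for x using r by (simp add: divide_inverse)
  show ?thesis unfolding flux1_d_theta_def flux2_d_phi_def defect_frame_def Let_def r d d2
    using sr by algebra
qed

lemma inverse_as_unknown: "(\<And>r. x * r = 1 \<Longrightarrow> P r) \<Longrightarrow> (x::real) \<noteq> 0 \<Longrightarrow> P (inverse x)"
  by simp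

lemma inverse_two: "inverse (2::real) = 1/2" by simp

lemma inverse_normalize:
  "(x::real) / y = x * inverse y" "inverse (a * b) = inverse a * inverse (b::real)"
  "inverse (a ^ n) = (inverse a) ^ n"
  by (simp_all add: divide_inverse power_inverse)

lemma flux1_has_real_derivative:
  fixes u ut up utt utp upp uttt uttp utpp v vt vp vtt vtp :: "real \<Rightarrow> real"
  assumes d: "(u has_real_derivative ut t) (at t)" "(ut has_real_derivative utt t) (at t)"
    "(up has_real_derivative utp t) (at t)" "(utt has_real_derivative uttt t) (at t)"
    "(utp has_real_derivative uttp t) (at t)" "(upp has_real_derivative utpp t) (at t)"
    "(v has_real_derivative vt t) (at t)" "(vt has_real_derivative vtt t) (at t)"
    "(vp has_real_derivative vtp t) (at t)"
  and s: "sin t \<noteq> 0"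
  shows "((\<lambda>t. sin t * flux1 (u t) (ut t) (up t / sin t) (utt t) ((utp t - cos t * (up t / sin t)) / sin t)
        ((upp t + sin t * cos t * ut t) / (sin t * sin t)) (v t) (vt t) (vp t / sin t))
     has_real_derivative flux1_d_theta (sin t) (cos t) (u t) (ut t) (up t) (utt t) (utp t) (upp t)
        (uttt t) (uttp t) (utpp t) (v t) (vt t) (vp t) (vtt t) (vtp t)) (at t)"
  unfolding flux1_def
  apply (rule derivative_eq_intros d refl | (use s in simp; fail))+
  unfolding flux1_d_theta_def Let_def inverse_normalize
  unfolding inverse_two
  apply (rule inverse_as_unknown[of "sin t"])
   apply (erule rev_mp)
   apply algebra
  using s by simp

lemma flux2_has_real_derivative:
  fixes u ut up utt utp upp uttp utpp uppp v vt vp vtp vpp :: "real \<Rightarrow> real"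
  assumes d: "(u has_real_derivative up y) (at y)" "(ut has_real_derivative utp y) (at y)"
    "(up has_real_derivative upp y) (at y)" "(utt has_real_derivative uttp y) (at y)"
    "(utp has_real_derivative utpp y) (at y)" "(upp has_real_derivative uppp y) (at y)"
    "(v has_real_derivative vp y) (at y)" "(vt has_real_derivative vtp y) (at y)"
    "(vp has_real_derivative vpp y) (at y)"
  and s: "s \<noteq> 0"
  shows "((\<lambda>y. flux2 (u y) (ut y) (up y / s) (utt y) ((utp y - c * (up y / s)) / s)
        ((upp y + s * c * ut y) / (s * s)) (v y) (vt y) (vp y / s))
     has_real_derivative flux2_d_phi s c (u y) (ut y) (up y) (utt y) (utp y) (upp y) (uttp y) (utpp y) (uppp y)
        (v y) (vt y) (vp y) (vtp y) (vpp y)) (at y)"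
  unfolding flux2_def
  apply (rule derivative_eq_intros d refl | (use s in simp; fail))+
  unfolding flux2_d_phi_def Let_def inverse_normalize
  unfolding inverse_two
  apply (rule inverse_as_unknown[of "s"])
   apply (erule rev_mp)
   apply algebra
  using s by simp

section \<open>Zero-homogeneous extensions\<close>

lemma hext_sphere: "x \<in> sphere 0 1 \<Longrightarrow> hext f x = f x"
  by (simp add: hext_def sgn_div_norm)

lemma sgn_sphere: "y \<noteq> 0 \<Longrightarrow> sgn (y::'a::real_normed_vector) \<in> sphere 0 1"
  by (simp add: norm_sgn)

lemma hext_scaleR: "t > 0 \<Longrightarrow> hext f (t *\<^sub>R y) = hext f y"
  by (simp add: hext_def sgn_scaleR)

lemma fd_radial_eq_0:
  fixes f :: "'a::real_normed_vector \<Rightarrow> 'b::real_normed_vector"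
  assumes d: "f differentiable (at y)" and hom: "\<And>t. t > 0 \<Longrightarrow> f (t *\<^sub>R y) = f y"
  shows "fd f y y = 0"
proof -
  have h1: "((\<lambda>t. f (t *\<^sub>R y)) has_derivative (\<lambda>h. fd f y (h *\<^sub>R y))) (at 1)"
  proof -
    have "((\<lambda>t::real. t *\<^sub>R y) has_derivative (\<lambda>h. h *\<^sub>R y)) (at 1)"
      by (rule has_derivative_scaleR_left[OF has_derivative_ident])
    from diff_chain_at[OF this, of f] fd_has_derivative[OF d] show ?thesis by (simp add: o_def)
  qed
  have h2: "((\<lambda>t. f (t *\<^sub>R y)) has_derivative (\<lambda>h. 0)) (at (1::real))"
  proof -
    have "((\<lambda>t. f y) has_derivative (\<lambda>h. 0)) (at (1::real))" by simp
    then show ?thesis by (rule has_derivative_transform_within_open[where s="{0<..}"]) (auto simp: hom)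
  qed
  have "(\<lambda>h. fd f y (h *\<^sub>R y)) = (\<lambda>h. 0)" by (rule has_derivative_unique[OF h1 h2])
  then show ?thesis by (metis scale_one)
qed

lemma fd_hext_radial_eq_0: "hext f differentiable (at y) \<Longrightarrow> fd (hext f) y y = 0"
  by (rule fd_radial_eq_0) (auto simp: hext_scaleR)

lemma open_scone:
  assumes "openin (top_of_set (sphere 0 1)) V"
  shows "open (scone V)"
proof -
  obtain W where W: "open W" "V = sphere 0 1 \<inter> W" using assms by (auto simp: openin_open)
  have c: "continuous_on (- {0}) (sgn :: real^3 \<Rightarrow> real^3)"
    using Ck_imp_continuous_on[OF Ck_sgn[of "- {0}" 0]] by auto
  have "open (sgn -` W \<inter> (- {0::real^3}))"
    using c W(1) continuous_on_open_vimage[of "- {0::real^3}" sgn] by (auto simp: open_Compl)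
  moreover have "scone V = sgn -` W \<inter> (- {0})"
    using W(2) sgn_sphere by (auto simp: scone_def)
  ultimately show ?thesis by simp
qed

lemma Ck_tproj: "open S \<Longrightarrow> Ck n S (\<lambda>z. tproj z b)"
  unfolding tproj_def
  by (intro Ck_diff Ck_const Ck_scaleR Ck_bounded_linear bounded_linear_inner_right bounded_linear_ident) auto

lemma Ck_sph_div:
  assumes S: "open S" and G: "Cinf_on S (hext Y)"
  shows "Ck n S (\<lambda>z. sph_div Y z)"
proof -
  have e: "sph_div Y z = (\<Sum>b\<in>Basis. \<Sum>i\<in>Basis. (tproj z b \<bullet> i) * (fd (hext Y) z i \<bullet> tproj z b))"
    if z: "z \<in> S" for z
  proof -
    have "fd (hext Y) z (tproj z b) \<bullet> tproj z b
        = (\<Sum>i\<in>Basis. (tproj z b \<bullet> i) * (fd (hext Y) z i \<bullet> tproj z b))" for b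
      using fd_expand_Basis[OF Cinf_imp_differentiable[OF G z], of "tproj z b"] by (simp add: inner_sum_left)
    then show ?thesis unfolding sph_div_def cov_deriv_def D1_def by simp
  qed
  show ?thesis
  proof (rule Ck_cong[OF S e[symmetric]])
    show "Ck n S (\<lambda>x. \<Sum>b\<in>Basis. \<Sum>i\<in>Basis. tproj x b \<bullet> i * (fd (hext Y) x i \<bullet> tproj x b))"
      by (intro Ck_sum Ck_mult Ck_inner Ck_tproj Ck_const S finite_Basis Cinf_imp_Ck Cinf_fd G)
  qed
qed

section \<open>Conformal Killing fields and integration over the sphere\<close>

locale conformal_killing_setup =
  fixes U :: "(real^3) set" and Y :: "real^3 \<Rightarrow> real^3" and u :: "real^3 \<Rightarrow> real" and K :: "(real^3) set"
  assumes U_sphere: "U \<subseteq> sphere 0 1"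
    and U_open: "openin (top_of_set (sphere 0 1)) U"
    and Y_smooth: "Cinf_on (scone U) (hext Y)"
    and Y_tangent: "\<forall>x\<in>U. Y x \<bullet> x = 0"
    and Y_conformal_killing: "conformal_killing_on U Y"
    and u_smooth: "Cinf_on (scone U) (hext u)"
    and K_compact: "compact K" and K_U: "K \<subseteq> U" and u_outside_K: "\<forall>x\<in>sphere 0 1 - K. u x = 0"
begin

definition "Y1 = (\<lambda>y. sph_div Y y / 2)"

definition "cone_off_K = scone (sphere 0 1 - K)"

lemma open_cone_U: "open (scone U)" by (rule open_scone[OF U_open])

lemma open_cone_off_K: "open cone_off_K"
proof -
  have "closedin (top_of_set (sphere 0 1)) K"
    using K_U U_sphere K_compact by (intro closed_subset) (auto intro: compact_imp_closed)
  then have "openin (top_of_set (sphere 0 1)) (sphere 0 1 - K)"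
    by (intro openin_diff) auto
  then show ?thesis unfolding cone_off_K_def by (rule open_scone)
qed

lemma U_subset_cone: "U \<subseteq> scone U"
  using U_sphere by (auto simp: scone_def sgn_div_norm)

lemma cone_U_Un_cone_off_K: "scone U \<union> cone_off_K = - {0}"
  using K_U sgn_sphere by (auto simp: scone_def cone_off_K_def)

lemma hext_u_cone_off_K: "y \<in> cone_off_K \<Longrightarrow> hext u y = 0"
  using u_outside_K sgn_sphere by (auto simp: cone_off_K_def scone_def hext_def)

lemma hext_u_smooth: "Cinf_on (- {0}) (hext u)"
proof -
  have "Cinf_on cone_off_K (hext u)"
    by (rule Cinf_cong[OF open_cone_off_K, of "\<lambda>y. 0"]) (auto simp: hext_u_cone_off_K Cinf_on_def Ck_const)
  then show ?thesis using Cinf_union[OF open_cone_U open_cone_off_K u_smooth] cone_U_Un_cone_off_K by simp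
qed

lemma Y1_smooth: "Cinf_on (scone U) Y1"
  unfolding Y1_def Cinf_on_def
proof
  fix n
  have "Ck n (scone U) (\<lambda>z. sph_div Y z * (1/2))"
    by (intro Ck_mult Ck_sph_div[OF open_cone_U Y_smooth] Ck_const open_cone_U)
  then show "Ck n (scone U) (\<lambda>y. sph_div Y y / 2)" by simp
qed

lemma hext_Y1_smooth: "Cinf_on (scone U) (hext Y1)"
  unfolding Cinf_on_def hext_def
proof
  fix n
  have sg: "Ck n (scone U) sgn" by (rule Ck_sgn[OF open_cone_U]) (auto simp: scone_def)
  have im: "sgn ` scone U \<subseteq> scone U" using U_subset_cone by (auto simp: scone_def)
  show "Ck n (scone U) (\<lambda>y. Y1 (sgn y))"
    by (rule Ck_comp[OF open_cone_U open_cone_U im Cinf_imp_Ck[OF Y1_smooth] sg])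
qed

definition "PU = {q. sph_par q \<in> U}"
definition "PK = {q. sph_par q \<notin> K}"

lemma isCont_sph_par: "continuous (at q) sph_par"
  by (metis continuous_on_eq_continuous_at open_UNIV UNIV_I continuous_on_sph_frame(1))

lemma open_PU: "open PU"
proof -
  have "PU = sph_par -` scone U"
    by (auto simp: PU_def scone_def sgn_div_norm)
  then show ?thesis using continuous_open_vimage[OF open_cone_U isCont_sph_par] by simp
qed

lemma open_PK: "open PK"
proof -
  have "PK = sph_par -` (- K)" by (auto simp: PK_def)
  moreover have "open (- K)" using K_compact by (simp add: compact_imp_closed open_Compl)
  ultimately show ?thesis using continuous_open_vimage[OF _ isCont_sph_par] by metis
qed

lemma PU_Un_PK: "PU \<union> PK = UNIV"
  using K_U by (auto simp: PU_def PK_def)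

definition "u_par q = hext u (sph_par q)"
definition "Y1_par q = hext Y1 (sph_par q)"
definition "Y_theta q = hext Y (sph_par q) \<bullet> e_theta q"
definition "Y_phi q = hext Y (sph_par q) \<bullet> e_phi q"

lemma u_par_smooth: "Cinf_on UNIV u_par"
  unfolding Cinf_on_def u_par_def
proof
  fix n
  show "Ck n UNIV (\<lambda>q. hext u (sph_par q))"
    by (rule Ck_comp[OF _ open_UNIV _ Cinf_imp_Ck[OF hext_u_smooth] Ck_sph_par[OF open_UNIV]]) auto
qed

lemma Y1_par_smooth: "Cinf_on PU Y1_par"
  unfolding Cinf_on_def Y1_par_def
proof
  fix n
  show "Ck n PU (\<lambda>q. hext Y1 (sph_par q))"
    by (rule Ck_comp[OF open_cone_U open_PU _ Cinf_imp_Ck[OF hext_Y1_smooth] Ck_sph_par[OF open_PU]])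
       (use U_subset_cone in \<open>auto simp: PU_def\<close>)
qed

lemma Ck_Y_par: "Ck n PU (\<lambda>q. hext Y (sph_par q))"
proof (rule Ck_componentwise[OF open_PU])
  fix i :: "real^3" assume "i \<in> Basis"
  have "Ck n (scone U) (\<lambda>y. hext Y y \<bullet> i)"
    by (rule Ck_bounded_linear_comp[OF bounded_linear_inner_left open_cone_U Cinf_imp_Ck[OF Y_smooth]])
  moreover have im: "sph_par ` PU \<subseteq> scone U" using U_subset_cone by (auto simp: PU_def)
  ultimately show "Ck n PU (\<lambda>x. hext Y (sph_par x) \<bullet> i)"
    using Ck_comp[OF open_cone_U open_PU im _ Ck_sph_par[OF open_PU]] by blast
qed

lemma Y_theta_smooth: "Cinf_on PU Y_theta"
  unfolding Cinf_on_def Y_theta_def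
  by (intro allI Ck_inner[OF open_PU Ck_Y_par Ck_e_theta[OF open_PU]])

lemma Y_phi_smooth: "Cinf_on PU Y_phi"
  unfolding Cinf_on_def Y_phi_def
  by (intro allI Ck_inner[OF open_PU Ck_Y_par Ck_e_phi[OF open_PU]])

lemma u_par_PK: "q \<in> PK \<Longrightarrow> u_par q = 0"
  unfolding u_par_def PK_def using u_outside_K hext_sphere[of "sph_par q" u] by auto

lemma sph_par_PU: "q \<in> PU \<Longrightarrow> sph_par q \<in> scone U" using U_subset_cone by (auto simp: PU_def)

lemma hext_Y_differentiable: "q \<in> PU \<Longrightarrow> hext Y differentiable (at (sph_par q))"
  using Cinf_imp_differentiable[OF Y_smooth sph_par_PU] by blast

lemma hext_Y_tangent: "q \<in> PU \<Longrightarrow> hext Y (sph_par q) \<bullet> sph_par q = 0"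
  using Y_tangent hext_sphere[of "sph_par q" Y] by (auto simp: PU_def)

lemma has_derivative_Y_par: "q \<in> PU \<Longrightarrow> ((\<lambda>q. hext Y (sph_par q)) has_derivative
   (\<lambda>d. fd (hext Y) (sph_par q) (fst d *\<^sub>R e_theta q + (snd d * sin (fst q)) *\<^sub>R e_phi q))) (at q)"
  using diff_chain_at[OF has_derivative_sph_par fd_has_derivative[OF hext_Y_differentiable]]
  by (simp add: o_def)

lemma d_Y_frame:
  assumes q: "q \<in> PU"
  shows "d_theta Y_theta q = fd (hext Y) (sph_par q) (e_theta q) \<bullet> e_theta q"
    "d_phi Y_theta q = cos (fst q) * Y_phi q + sin (fst q) * (fd (hext Y) (sph_par q) (e_phi q) \<bullet> e_theta q)"
    "d_theta Y_phi q = fd (hext Y) (sph_par q) (e_theta q) \<bullet> e_phi q"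
    "d_phi Y_phi q = sin (fst q) * (fd (hext Y) (sph_par q) (e_phi q) \<bullet> e_phi q) - cos (fst q) * Y_theta q"
proof -
  have L: "linear (fd (hext Y) (sph_par q))" using linear_fd[OF hext_Y_differentiable[OF q]] .
  note ha = fd_eq[OF has_derivative_inner[OF has_derivative_Y_par[OF q] has_derivative_e_theta]]
  note hb = fd_eq[OF has_derivative_inner[OF has_derivative_Y_par[OF q] has_derivative_e_phi]]
  have t: "hext Y (sph_par q) \<bullet> sph_par q = 0" by (rule hext_Y_tangent[OF q])
  show "d_theta Y_theta q = fd (hext Y) (sph_par q) (e_theta q) \<bullet> e_theta q"
    unfolding d_theta_def Y_theta_def[abs_def] ha using t by simp
  show "d_phi Y_theta q = cos (fst q) * Y_phi q + sin (fst q) * (fd (hext Y) (sph_par q) (e_phi q) \<bullet> e_theta q)"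
    unfolding d_phi_def Y_theta_def[abs_def] ha by (simp add: Y_phi_def linear_scale[OF L])
  show "d_theta Y_phi q = fd (hext Y) (sph_par q) (e_theta q) \<bullet> e_phi q"
    unfolding d_theta_def Y_phi_def[abs_def] hb by simp
  show "d_phi Y_phi q = sin (fst q) * (fd (hext Y) (sph_par q) (e_phi q) \<bullet> e_phi q) - cos (fst q) * Y_theta q"
    unfolding d_phi_def Y_phi_def[abs_def] hb using t
    by (simp add: Y_theta_def linear_scale[OF L] inner_add_right algebra_simps)
qed

lemma sph_div_frame: "q \<in> PU \<Longrightarrow> sph_div Y (sph_par q) =
   fd (hext Y) (sph_par q) (e_theta q) \<bullet> e_theta q + fd (hext Y) (sph_par q) (e_phi q) \<bullet> e_phi q"
proof -
  assume q: "q \<in> PU"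
  have B: "bilinear (\<lambda>v w. fd (hext Y) (sph_par q) v \<bullet> w)"
    by (rule bilinear_linear_inner[OF linear_fd[OF hext_Y_differentiable[OF q]]])
  show ?thesis unfolding sph_div_def cov_deriv_def D1_def using sum_tproj_bilinear[OF B] by simp
qed

lemma conformal_killing_frame:
  assumes q: "q \<in> PU"
  shows "fd (hext Y) (sph_par q) (e_theta q) \<bullet> e_theta q = Y1 (sph_par q)"
    "fd (hext Y) (sph_par q) (e_phi q) \<bullet> e_phi q = Y1 (sph_par q)"
    "fd (hext Y) (sph_par q) (e_theta q) \<bullet> e_phi q + fd (hext Y) (sph_par q) (e_phi q) \<bullet> e_theta q = 0"
proof -
  have pU: "sph_par q \<in> U" using q by (simp add: PU_def)
  have c: "\<And>v w. v \<bullet> sph_par q = 0 \<Longrightarrow> w \<bullet> sph_par q = 0 \<Longrightarrow>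
      fd (hext Y) (sph_par q) v \<bullet> w + fd (hext Y) (sph_par q) w \<bullet> v - sph_div Y (sph_par q) * (v \<bullet> w) = 0"
    using Y_conformal_killing pU unfolding conformal_killing_on_def cov_deriv_def D1_def by blast
  note d = sph_div_frame[OF q]
  show "fd (hext Y) (sph_par q) (e_theta q) \<bullet> e_theta q = Y1 (sph_par q)"
    using c[of "e_theta q" "e_theta q"] c[of "e_phi q" "e_phi q"] d by (simp add: Y1_def)
  show "fd (hext Y) (sph_par q) (e_phi q) \<bullet> e_phi q = Y1 (sph_par q)"
    using c[of "e_theta q" "e_theta q"] c[of "e_phi q" "e_phi q"] d by (simp add: Y1_def)
  show "fd (hext Y) (sph_par q) (e_theta q) \<bullet> e_phi q + fd (hext Y) (sph_par q) (e_phi q) \<bullet> e_theta q = 0"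
    using c[of "e_theta q" "e_phi q"] by simp
qed

lemma Y1_par_eq: "q \<in> PU \<Longrightarrow> Y1_par q = Y1 (sph_par q)"
  unfolding Y1_par_def by (rule hext_sphere) simp

lemma Y1_par_eq_d_theta_Y_theta: "q \<in> PU \<Longrightarrow> Y1_par q = d_theta Y_theta q"
  using Y1_par_eq d_Y_frame(1) conformal_killing_frame(1) by simp

lemma d_phi_Y_phi: "q \<in> PU \<Longrightarrow> d_phi Y_phi q = sin (fst q) * d_theta Y_theta q - cos (fst q) * Y_theta q"
  using d_Y_frame(1,4) conformal_killing_frame(1,2) by simp

lemma d_phi_Y_theta: "q \<in> PU \<Longrightarrow> d_phi Y_theta q = cos (fst q) * Y_phi q - sin (fst q) * d_theta Y_phi q"
proof -
  assume q: "q \<in> PU"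
  have "fd (hext Y) (sph_par q) (e_phi q) \<bullet> e_theta q = - d_theta Y_phi q"
    using d_Y_frame(3)[OF q] conformal_killing_frame(3)[OF q] by linarith
  then show ?thesis using d_Y_frame(2)[OF q] by simp
qed

lemma Y_frame_jets_smooth:
  "Cinf_on PU (d_theta Y_theta)" "Cinf_on PU (d_theta (d_theta Y_theta))"
  "Cinf_on PU (d_theta Y_phi)" "Cinf_on PU (d_phi Y_theta)" "Cinf_on PU (d_phi Y_phi)"
  using Y_theta_smooth Y_phi_smooth by (auto intro!: Cinf_d_theta Cinf_d_phi)

lemma Y1_par_jets:
  assumes q: "q \<in> PU"
  shows "d_theta Y1_par q = d_theta (d_theta Y_theta) q"
    "d_theta (d_theta Y1_par) q = d_theta (d_theta (d_theta Y_theta)) q"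
    "d_phi Y1_par q = d_phi (d_theta Y_theta) q"
    "d_phi (d_phi Y1_par) q = d_phi (d_phi (d_theta Y_theta)) q"
proof -
  have e0: "z \<in> PU \<Longrightarrow> d_theta Y_theta z = Y1_par z" for z using Y1_par_eq_d_theta_Y_theta by simp
  have e1: "z \<in> PU \<Longrightarrow> d_theta Y1_par z = d_theta (d_theta Y_theta) z" for z
    by (rule d_theta_cong[OF open_PU _ e0]) (use Cinf_imp_differentiable[OF Y_frame_jets_smooth(1)] in auto)
  have e2: "z \<in> PU \<Longrightarrow> d_phi Y1_par z = d_phi (d_theta Y_theta) z" for z
    by (rule d_phi_cong[OF open_PU _ e0]) (use Cinf_imp_differentiable[OF Y_frame_jets_smooth(1)] in auto)
  show "d_theta Y1_par q = d_theta (d_theta Y_theta) q" using e1[OF q] by simp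
  show "d_phi Y1_par q = d_phi (d_theta Y_theta) q" using e2[OF q] by simp
  show "d_theta (d_theta Y1_par) q = d_theta (d_theta (d_theta Y_theta)) q"
    by (rule d_theta_cong[OF open_PU q e1[symmetric]])
       (use Cinf_imp_differentiable[OF Y_frame_jets_smooth(2) q] in auto)
  show "d_phi (d_phi Y1_par) q = d_phi (d_phi (d_theta Y_theta)) q"
    by (rule d_phi_cong[OF open_PU q e2[symmetric]])
       (use Cinf_imp_differentiable[OF Cinf_d_phi[OF Y_frame_jets_smooth(1)] q] in auto)
qed

lemma d_phi_d_phi_Y_theta:
  assumes q: "(t, y) \<in> PU"
  shows "d_phi (d_phi Y_theta) (t, y) = cos t * sin t * d_theta Y_theta (t, y) - Y_theta (t, y)
    - sin t * sin t * d_theta (d_theta Y_theta) (t, y)"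
proof -
  have d1: "d_phi (d_phi Y_theta) (t, y) = cos t * d_phi Y_phi (t, y) - sin t * d_phi (d_theta Y_phi) (t, y)"
  proof (rule d_phi_via[OF open_PU q Cinf_imp_differentiable[OF Y_frame_jets_smooth(4) q]])
    show "(t, y') \<in> PU \<Longrightarrow> d_phi Y_theta (t, y') = cos t * Y_phi (t, y') - sin t * d_theta Y_phi (t, y')" for y'
      using d_phi_Y_theta[of "(t, y')"] by simp
    show "((\<lambda>y'. cos t * Y_phi (t, y') - sin t * d_theta Y_phi (t, y')) has_real_derivative
        cos t * d_phi Y_phi (t, y) - sin t * d_phi (d_theta Y_phi) (t, y)) (at y)"
      by (intro DERIV_diff DERIV_cmult Cinf_has_real_derivative_d_phi[OF Y_phi_smooth q]
          Cinf_has_real_derivative_d_phi[OF Y_frame_jets_smooth(3) q])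
  qed
  have d2: "d_phi (d_theta Y_phi) (t, y)
      = (cos t * d_theta Y_theta (t, y) + sin t * d_theta (d_theta Y_theta) (t, y))
        - (- sin t * Y_theta (t, y) + cos t * d_theta Y_theta (t, y))"
    unfolding Cinf_d_theta_d_phi[OF open_PU Y_phi_smooth q, symmetric]
  proof (rule d_theta_via[OF open_PU q Cinf_imp_differentiable[OF Y_frame_jets_smooth(5) q]])
    show "d_phi Y_phi (t', y) = sin t' * d_theta Y_theta (t', y) - cos t' * Y_theta (t', y)"
      if "(t', y) \<in> PU" for t'
      using d_phi_Y_phi[OF that] by simp
    show "((\<lambda>t'. sin t' * d_theta Y_theta (t', y) - cos t' * Y_theta (t', y)) has_real_derivative
        (cos t * d_theta Y_theta (t, y) + sin t * d_theta (d_theta Y_theta) (t, y))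
        - (- sin t * Y_theta (t, y) + cos t * d_theta Y_theta (t, y))) (at t)"
      by (rule derivative_eq_intros Cinf_has_real_derivative_d_theta[OF Y_theta_smooth q]
          Cinf_has_real_derivative_d_theta[OF Y_frame_jets_smooth(1) q] refl | simp add: algebra_simps)+
  qed
  show ?thesis
    unfolding d1 d2 d_phi_Y_phi[OF q] fst_conv using sin_cos_squared_add3[of t] by algebra
qed

lemma d_phi_d_phi_Y1_par:
  assumes q: "(t, y) \<in> PU"
  shows "d_phi (d_phi Y1_par) (t, y) = (cos t * cos t - sin t * sin t - 1) * Y1_par (t, y)
    - sin t * cos t * d_theta Y1_par (t, y) - sin t * sin t * d_theta (d_theta Y1_par) (t, y)"
proof -
  have "d_phi (d_phi Y1_par) (t, y) = d_theta (d_phi (d_phi Y_theta)) (t, y)"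
    using Y1_par_jets(4)[OF q] Cinf_d_theta_d_phi_d_phi[OF open_PU Y_theta_smooth q] by simp
  also have "\<dots> = ((- sin t * sin t + cos t * cos t) * d_theta Y_theta (t, y)
      + cos t * sin t * d_theta (d_theta Y_theta) (t, y)) - d_theta Y_theta (t, y) - ((cos t * sin t + sin t * cos t) * d_theta (d_theta Y_theta) (t, y)
      + sin t * sin t * d_theta (d_theta (d_theta Y_theta)) (t, y))"
  proof (rule d_theta_via[OF open_PU q Cinf_imp_differentiable[OF Cinf_d_phi[OF Y_frame_jets_smooth(4)] q]])
    show "(t', y) \<in> PU \<Longrightarrow> d_phi (d_phi Y_theta) (t', y) = cos t' * sin t' * d_theta Y_theta (t', y)
        - Y_theta (t', y) - sin t' * sin t' * d_theta (d_theta Y_theta) (t', y)" for t'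
      by (rule d_phi_d_phi_Y_theta)
    show "((\<lambda>t'. cos t' * sin t' * d_theta Y_theta (t', y) - Y_theta (t', y)
        - sin t' * sin t' * d_theta (d_theta Y_theta) (t', y)) has_real_derivative
      ((- sin t * sin t + cos t * cos t) * d_theta Y_theta (t, y)
      + cos t * sin t * d_theta (d_theta Y_theta) (t, y)) - d_theta Y_theta (t, y) - ((cos t * sin t + sin t * cos t) * d_theta (d_theta Y_theta) (t, y)
      + sin t * sin t * d_theta (d_theta (d_theta Y_theta)) (t, y))) (at t)"
      by (rule derivative_eq_intros Cinf_has_real_derivative_d_theta[OF Y_theta_smooth q]
          Cinf_has_real_derivative_d_theta[OF Y_frame_jets_smooth(1) q]
          Cinf_has_real_derivative_d_theta[OF Y_frame_jets_smooth(2) q] refl | simp add: algebra_simps)+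
  qed
  also have "\<dots> = (cos t * cos t - sin t * sin t - 1) * Y1_par (t, y)
      - sin t * cos t * d_theta Y1_par (t, y) - sin t * sin t * d_theta (d_theta Y1_par) (t, y)"
    using Y1_par_jets(1,2)[OF q] Y1_par_eq_d_theta_Y_theta[OF q] by (simp add: algebra_simps)
  finally show ?thesis .
qed

text \<open>(Delta + 2) Y1 = 0, multiplied by sin^2 theta.\<close>

lemma Y1_par_eigenfunction:
  assumes "q \<in> PU"
  shows "sin (fst q) * sin (fst q) * (d_theta (d_theta Y1_par) q + 2 * Y1_par q)
    + sin (fst q) * cos (fst q) * d_theta Y1_par q + d_phi (d_phi Y1_par) q = 0"
proof -
  obtain t y where q: "q = (t, y)" by (cases q)
  show ?thesis
    using d_phi_d_phi_Y1_par[of t y] assms sin_cos_squared_add3[of t] unfolding q fst_conv by algebra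
qed

definition "hess_dens x = (if x \<in> U then Y1 x * (2 * sph_hess_sq u x - (sph_lap u x)^2) else 0)"
definition "lap_dens x = (if x \<in> U then Y1 x * (sph_lap u x + 2 * u x)^2 else 0)"
definition "pair_dens x = (if x \<in> U then u x * sph_hess_pair Y1 u x else 0)"

abbreviation "Hu v w q \<equiv> D2 (hext u) (sph_par q) (v q) (w q)"
abbreviation "HY1 v w q \<equiv> D2 (hext Y1) (sph_par q) (v q) (w q)"

lemma bilinear_D2_hext_u: "bilinear (D2 (hext u) (sph_par q))"
  by (rule D2_bilinear[OF _ Cinf_imp_Ck[OF hext_u_smooth]]) (auto simp: open_Compl)

lemma bilinear_D2_hext_Y1: "q \<in> PU \<Longrightarrow> bilinear (D2 (hext Y1) (sph_par q))"
  by (rule D2_bilinear[OF open_cone_U Cinf_imp_Ck[OF hext_Y1_smooth] sph_par_PU])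

lemma densities_frame:
  assumes q: "q \<in> PU"
  shows "hess_dens (sph_par q) = Y1 (sph_par q) * (2 * ((Hu e_theta e_theta q)^2 + (Hu e_theta e_phi q)^2
      + (Hu e_phi e_theta q)^2 + (Hu e_phi e_phi q)^2) - (Hu e_theta e_theta q + Hu e_phi e_phi q)^2)"
    "lap_dens (sph_par q)
      = Y1 (sph_par q) * (Hu e_theta e_theta q + Hu e_phi e_phi q + 2 * hext u (sph_par q))^2"
    "pair_dens (sph_par q) = hext u (sph_par q)
      * (HY1 e_theta e_theta q * (Hu e_theta e_theta q - (Hu e_theta e_theta q + Hu e_phi e_phi q) / 2)
      + HY1 e_theta e_phi q * Hu e_theta e_phi q + HY1 e_phi e_theta q * Hu e_phi e_theta q
      + HY1 e_phi e_phi q * (Hu e_phi e_phi q - (Hu e_theta e_theta q + Hu e_phi e_phi q) / 2))"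
  using q sph_lap_sph_par[OF bilinear_D2_hext_u] sph_hess_sq_sph_par[OF bilinear_D2_hext_u]
    sph_hess_pair_sph_par[OF bilinear_D2_hext_Y1[OF q] bilinear_D2_hext_u]
  by (simp_all add: hess_dens_def lap_dens_def pair_dens_def PU_def hext_sphere)

lemma sph_par_PK: "q \<in> PK \<Longrightarrow> sph_par q \<in> cone_off_K"
  by (auto simp: PK_def cone_off_K_def scone_def sgn_div_norm)

lemma hext_u_PK:
  assumes q: "q \<in> PK"
  shows "hext u (sph_par q) = 0" "D2 (hext u) (sph_par q) v w = 0" "fd (hext u) (sph_par q) v = 0"
  using hext_u_cone_off_K[OF sph_par_PK[OF q]]
    D2_locally_zero[OF open_cone_off_K sph_par_PK[OF q] hext_u_cone_off_K]
    fd_locally_zero[OF open_cone_off_K sph_par_PK[OF q] hext_u_cone_off_K] by simp_all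

lemma densities_PK:
  assumes q: "q \<in> PK"
  shows "hess_dens (sph_par q) = 0" "lap_dens (sph_par q) = 0" "pair_dens (sph_par q) = 0"
proof -
  note z = hext_u_PK[OF q]
  show "hess_dens (sph_par q) = 0"
    by (cases "q \<in> PU") (simp_all add: densities_frame z, simp add: hess_dens_def PU_def)
  show "lap_dens (sph_par q) = 0"
    by (cases "q \<in> PU") (simp_all add: densities_frame z, simp add: lap_dens_def PU_def)
  show "pair_dens (sph_par q) = 0"
    by (cases "q \<in> PU") (simp_all add: densities_frame z, simp add: pair_dens_def PU_def)
qed

lemma continuous_on_Hu: "continuous_on Q v \<Longrightarrow> continuous_on Q w \<Longrightarrow> continuous_on Q (Hu v w)"
  by (rule continuous_on_D2_comp_sph_par[OF _ hext_u_smooth]) (auto simp: open_Compl)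

lemma continuous_on_HY1: "continuous_on PU v \<Longrightarrow> continuous_on PU w \<Longrightarrow> continuous_on PU (HY1 v w)"
  by (rule continuous_on_D2_comp_sph_par[OF open_cone_U hext_Y1_smooth]) (use sph_par_PU in auto)

lemma continuous_on_fd_hext_u: "continuous_on Q v \<Longrightarrow> continuous_on Q (\<lambda>q. fd (hext u) (sph_par q) (v q))"
  by (rule continuous_on_fd_comp_sph_par[OF _ hext_u_smooth]) (auto simp: open_Compl)

lemma continuous_on_fd_hext_Y1: "continuous_on PU v \<Longrightarrow> continuous_on PU (\<lambda>q. fd (hext Y1) (sph_par q) (v q))"
  by (rule continuous_on_fd_comp_sph_par[OF open_cone_U hext_Y1_smooth]) (use sph_par_PU in auto)

lemma continuous_on_Y1_sph_par: "continuous_on PU (\<lambda>q. Y1 (sph_par q))"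
  by (rule continuous_on_compose2[OF Cinf_imp_continuous_on[OF Y1_smooth] continuous_on_sph_frame(1)])
     (use sph_par_PU in auto)

lemma continuous_on_hext_u_sph_par: "continuous_on Q (\<lambda>q. hext u (sph_par q))"
  by (rule continuous_on_compose2[OF Cinf_imp_continuous_on[OF hext_u_smooth] continuous_on_sph_frame(1)]) auto

lemmas continuous_on_frame_data = continuous_on_Y1_sph_par continuous_on_hext_u_sph_par
  continuous_on_Hu continuous_on_HY1 continuous_on_fd_hext_u continuous_on_fd_hext_Y1 continuous_on_sph_frame

lemma continuous_on_from_PU:
  assumes "open T" "continuous_on (PU \<inter> T) f" "\<And>q. q \<in> PK \<Longrightarrow> f q = 0"
  shows "continuous_on T f"
proof -
  have "continuous_on (PK \<inter> T) f"
    by (rule continuous_on_eq[OF continuous_on_const[of _ 0]]) (use assms(3) in auto)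
  then have "continuous_on ((PU \<inter> T) \<union> (PK \<inter> T)) f"
    using continuous_on_open_Un[OF open_Int[OF open_PU assms(1)] open_Int[OF open_PK assms(1)] assms(2)] by simp
  moreover have "(PU \<inter> T) \<union> (PK \<inter> T) = T" using PU_Un_PK by auto
  ultimately show ?thesis by simp
qed

lemma continuous_on_UNIV_from_PU_eq:
  assumes "\<And>q. q \<in> PU \<Longrightarrow> f q = g q" "continuous_on PU g" "\<And>q. q \<in> PK \<Longrightarrow> f q = 0"
  shows "continuous_on UNIV f"
  using assms by (intro continuous_on_from_PU[OF open_UNIV]) (auto intro: continuous_on_eq)

lemma continuous_on_densities:
  "continuous_on UNIV (\<lambda>q. hess_dens (sph_par q) * sin (fst q))"
  "continuous_on UNIV (\<lambda>q. lap_dens (sph_par q) * sin (fst q))"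
  "continuous_on UNIV (\<lambda>q. pair_dens (sph_par q) * sin (fst q))"
  by (rule continuous_on_UNIV_from_PU_eq, simp add: densities_frame,
      (intro continuous_intros continuous_on_frame_data; simp), simp add: densities_PK)+

definition "flux_theta q = sin (fst q) * (if q \<in> PU then flux1 (hext u (sph_par q))
    (fd (hext u) (sph_par q) (e_theta q)) (fd (hext u) (sph_par q) (e_phi q))
    (Hu e_theta e_theta q) (Hu e_theta e_phi q) (Hu e_phi e_phi q)
    (Y1 (sph_par q)) (fd (hext Y1) (sph_par q) (e_theta q)) (fd (hext Y1) (sph_par q) (e_phi q)) else 0)"

definition "flux_phi q = (if q \<in> PU then flux2 (hext u (sph_par q))
    (fd (hext u) (sph_par q) (e_theta q)) (fd (hext u) (sph_par q) (e_phi q))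
    (Hu e_theta e_theta q) (Hu e_theta e_phi q) (Hu e_phi e_phi q)
    (Y1 (sph_par q)) (fd (hext Y1) (sph_par q) (e_theta q)) (fd (hext Y1) (sph_par q) (e_phi q)) else 0)"

definition "flux_theta_d_theta q = (if q \<in> PU then flux1_d_theta (sin (fst q)) (cos (fst q))
    (u_par q) (d_theta u_par q) (d_phi u_par q) (d_theta (d_theta u_par) q) (d_phi (d_theta u_par) q)
    (d_phi (d_phi u_par) q) (d_theta (d_theta (d_theta u_par)) q) (d_phi (d_theta (d_theta u_par)) q)
    (d_phi (d_phi (d_theta u_par)) q)
    (Y1_par q) (d_theta Y1_par q) (d_phi Y1_par q) (d_theta (d_theta Y1_par) q) (d_phi (d_theta Y1_par) q)
    else 0)"

definition "flux_phi_d_phi q = (if q \<in> PU then flux2_d_phi (sin (fst q)) (cos (fst q))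
    (u_par q) (d_theta u_par q) (d_phi u_par q) (d_theta (d_theta u_par) q) (d_phi (d_theta u_par) q)
    (d_phi (d_phi u_par) q) (d_phi (d_theta (d_theta u_par)) q) (d_phi (d_phi (d_theta u_par)) q)
    (d_phi (d_phi (d_phi u_par)) q)
    (Y1_par q) (d_theta Y1_par q) (d_phi Y1_par q) (d_phi (d_theta Y1_par) q) (d_phi (d_phi Y1_par) q) else 0)"

lemma frame_data_from_jets:
  assumes q: "q \<in> PU" and nz: "sin (fst q) \<noteq> 0"
  defines "S \<equiv> sin (fst q)" and "C \<equiv> cos (fst q)"
  shows "hext u (sph_par q) = u_par q"
    "fd (hext u) (sph_par q) (e_theta q) = d_theta u_par q"
    "fd (hext u) (sph_par q) (e_phi q) = d_phi u_par q / S"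
    "Hu e_theta e_theta q = d_theta (d_theta u_par) q"
    "Hu e_theta e_phi q = (d_phi (d_theta u_par) q - C * (d_phi u_par q / S)) / S"
    "Hu e_phi e_theta q = (d_phi (d_theta u_par) q - C * (d_phi u_par q / S)) / S"
    "Hu e_phi e_phi q = (d_phi (d_phi u_par) q + S * C * d_theta u_par q) / (S * S)"
    "Y1 (sph_par q) = Y1_par q"
    "fd (hext Y1) (sph_par q) (e_theta q) = d_theta Y1_par q"
    "fd (hext Y1) (sph_par q) (e_phi q) = d_phi Y1_par q / S"
    "HY1 e_theta e_theta q = d_theta (d_theta Y1_par) q"
    "HY1 e_theta e_phi q = (d_phi (d_theta Y1_par) q - C * (d_phi Y1_par q / S)) / S"
    "HY1 e_phi e_theta q = (d_phi (d_theta Y1_par) q - C * (d_phi Y1_par q / S)) / S"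
    "HY1 e_phi e_phi q = (d_phi (d_phi Y1_par) q + S * C * d_theta Y1_par q) / (S * S)"
  using frame_derivatives_from_jets[OF _ hext_u_smooth open_UNIV _ UNIV_I
      fd_hext_radial_eq_0[OF Cinf_imp_differentiable[OF hext_u_smooth]] nz, folded u_par_def[abs_def]]
    frame_derivatives_from_jets[OF open_cone_U hext_Y1_smooth open_PU sph_par_PU q
      fd_hext_radial_eq_0[OF Cinf_imp_differentiable[OF hext_Y1_smooth sph_par_PU[OF q]]] nz,
      folded Y1_par_def[abs_def]]
    Y1_par_eq[OF q]
  by (simp_all add: u_par_def S_def C_def open_Compl)

lemma u_par_jets_PK:
  assumes q: "q \<in> PK"
  shows "u_par q = 0" "d_theta u_par q = 0" "d_phi u_par q = 0" "d_theta (d_theta u_par) q = 0"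
    "d_phi (d_theta u_par) q = 0" "d_phi (d_phi u_par) q = 0" "d_theta (d_theta (d_theta u_par)) q = 0"
    "d_phi (d_theta (d_theta u_par)) q = 0" "d_phi (d_phi (d_theta u_par)) q = 0"
    "d_phi (d_phi (d_phi u_par)) q = 0"
proof -
  note zT = d_theta_locally_zero[OF open_PK] and zP = d_phi_locally_zero[OF open_PK]
  have z0: "z \<in> PK \<Longrightarrow> u_par z = 0" for z by (rule u_par_PK)
  have z1: "z \<in> PK \<Longrightarrow> d_theta u_par z = 0" "z \<in> PK \<Longrightarrow> d_phi u_par z = 0" for z
    using zT[OF z0] zP[OF z0] by auto
  have z2: "z \<in> PK \<Longrightarrow> d_theta (d_theta u_par) z = 0" "z \<in> PK \<Longrightarrow> d_phi (d_theta u_par) z = 0"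
    "z \<in> PK \<Longrightarrow> d_phi (d_phi u_par) z = 0" for z
    using zT[OF z1(1)] zP[OF z1(1)] zP[OF z1(2)] by auto
  show "u_par q = 0" "d_theta u_par q = 0" "d_phi u_par q = 0" "d_theta (d_theta u_par) q = 0"
    "d_phi (d_theta u_par) q = 0" "d_phi (d_phi u_par) q = 0" "d_theta (d_theta (d_theta u_par)) q = 0"
    "d_phi (d_theta (d_theta u_par)) q = 0" "d_phi (d_phi (d_theta u_par)) q = 0"
    "d_phi (d_phi (d_phi u_par)) q = 0"
    using z0 z1 z2 zT[OF z2(1)] zP[OF z2(1)] zP[OF z2(2)] zP[OF z2(3)] q by auto
qed

lemma fluxes_PK:
  assumes "q \<in> PK"
  shows "flux_theta q = 0" "flux_phi q = 0" "flux_theta_d_theta q = 0" "flux_phi_d_phi q = 0"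
  using hext_u_PK[OF assms] u_par_jets_PK[OF assms]
  by (simp_all add: flux_theta_def flux_phi_def flux_theta_d_theta_def flux_phi_d_phi_def
      flux1_def flux2_def flux1_d_theta_def flux2_d_phi_def)

definition "strip = {q :: real \<times> real. 0 < fst q \<and> fst q < pi}"

lemma open_strip: "open strip"
proof -
  have "strip = fst -` {0<..<pi}" by (auto simp: strip_def)
  moreover have "open (fst -` {0<..<pi::real} :: (real \<times> real) set)" by (rule open_vimage_fst) simp
  ultimately show ?thesis by simp
qed

lemma strip_sin_nonzero: "q \<in> strip \<Longrightarrow> sin (fst q) \<noteq> 0"
  unfolding strip_def using sin_gt_zero by force

lemma strip_PairI: "t \<in> {0<..<pi} \<Longrightarrow> (t, y) \<in> strip"
  by (simp add: strip_def)

lemma continuous_on_flux_theta: "continuous_on UNIV flux_theta"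
  by (rule continuous_on_UNIV_from_PU_eq[OF _ _ fluxes_PK(1)], simp add: flux_theta_def,
      unfold flux1_def, (intro continuous_intros continuous_on_frame_data; simp))

lemma continuous_on_flux_theta_d_theta: "continuous_on strip flux_theta_d_theta"
proof (rule continuous_on_from_PU[OF open_strip _ fluxes_PK(3)])
  have "continuous_on (PU \<inter> strip) (\<lambda>q. flux1_d_theta (sin (fst q)) (cos (fst q))
    (u_par q) (d_theta u_par q) (d_phi u_par q) (d_theta (d_theta u_par) q) (d_phi (d_theta u_par) q)
    (d_phi (d_phi u_par) q) (d_theta (d_theta (d_theta u_par)) q) (d_phi (d_theta (d_theta u_par)) q)
    (d_phi (d_phi (d_theta u_par)) q)
    (Y1_par q) (d_theta Y1_par q) (d_phi Y1_par q) (d_theta (d_theta Y1_par) q) (d_phi (d_theta Y1_par) q))"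
    unfolding flux1_d_theta_def Let_def
    using u_par_smooth Y1_par_smooth strip_sin_nonzero
    by (intro continuous_intros Cinf_imp_continuous_on[THEN continuous_on_subset] Cinf_d_theta Cinf_d_phi) auto
  then show "continuous_on (PU \<inter> strip) flux_theta_d_theta"
    by (rule continuous_on_eq) (simp add: flux_theta_d_theta_def)
qed

lemma open_PU_strip: "open (PU \<inter> strip)"
  using open_PU open_strip by auto

lemma flux_theta_has_real_derivative:
  assumes t: "(t, y) \<in> strip"
  shows "((\<lambda>t'. flux_theta (t', y)) has_real_derivative flux_theta_d_theta (t, y)) (at t)"
proof (cases "(t, y) \<in> PU")
  case True
  note U = Cinf_jets_has_real_derivative_theta[OF open_UNIV u_par_smooth UNIV_I[of "(t, y)"]]
  note V = Cinf_jets_has_real_derivative_theta[OF open_PU Y1_par_smooth True]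
  have eq: "flux_theta (t', y) = sin t' * flux1 (u_par (t', y)) (d_theta u_par (t', y))
      (d_phi u_par (t', y) / sin t') (d_theta (d_theta u_par) (t', y))
      ((d_phi (d_theta u_par) (t', y) - cos t' * (d_phi u_par (t', y) / sin t')) / sin t')
      ((d_phi (d_phi u_par) (t', y) + sin t' * cos t' * d_theta u_par (t', y)) / (sin t' * sin t'))
      (Y1_par (t', y)) (d_theta Y1_par (t', y)) (d_phi Y1_par (t', y) / sin t')"
    if "t' \<in> {t'. (t', y) \<in> PU \<inter> strip}" for t'
    using that strip_sin_nonzero[of "(t', y)"] frame_data_from_jets[of "(t', y)"]
    by (simp add: flux_theta_def)
  note D = flux1_has_real_derivative[where u = "\<lambda>t. u_par (t, y)" and ut = "\<lambda>t. d_theta u_par (t, y)"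
      and up = "\<lambda>t. d_phi u_par (t, y)" and utt = "\<lambda>t. d_theta (d_theta u_par) (t, y)"
      and utp = "\<lambda>t. d_phi (d_theta u_par) (t, y)" and upp = "\<lambda>t. d_phi (d_phi u_par) (t, y)"
      and uttt = "\<lambda>t. d_theta (d_theta (d_theta u_par)) (t, y)"
      and uttp = "\<lambda>t. d_phi (d_theta (d_theta u_par)) (t, y)"
      and utpp = "\<lambda>t. d_phi (d_phi (d_theta u_par)) (t, y)" and v = "\<lambda>t. Y1_par (t, y)"
      and vt = "\<lambda>t. d_theta Y1_par (t, y)" and vp = "\<lambda>t. d_phi Y1_par (t, y)"
      and vtt = "\<lambda>t. d_theta (d_theta Y1_par) (t, y)" and vtp = "\<lambda>t. d_phi (d_theta Y1_par) (t, y)",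
      OF U V(1-3) strip_sin_nonzero[OF t, simplified]]
  show ?thesis
    unfolding flux_theta_d_theta_def if_P[OF True] fst_conv
    by (rule has_field_derivative_transform_within_open[OF D open_slice_fst[OF open_PU_strip]])
       (use True t eq in auto)
next
  case False
  then have "(t, y) \<in> PK" using PU_Un_PK by auto
  then have "((\<lambda>t'. flux_theta (t', y)) has_real_derivative 0) (at t)"
    by (intro has_field_derivative_transform_within_open[OF DERIV_const open_slice_fst[OF open_PK]])
       (auto simp: fluxes_PK)
  then show ?thesis
    using False by (simp add: flux_theta_d_theta_def)
qed

lemma flux_phi_has_real_derivative:
  assumes t: "(t, y) \<in> strip"
  shows "((\<lambda>y'. flux_phi (t, y')) has_real_derivative flux_phi_d_phi (t, y)) (at y)"
proof (cases "(t, y) \<in> PU")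
  case True
  note U = Cinf_jets_has_real_derivative_phi[OF u_par_smooth UNIV_I[of "(t, y)"]]
  note V = Cinf_jets_has_real_derivative_phi[OF Y1_par_smooth True]
  have s: "sin t \<noteq> 0" using strip_sin_nonzero[OF t] by simp
  have eq: "flux_phi (t, y') = flux2 (u_par (t, y')) (d_theta u_par (t, y')) (d_phi u_par (t, y') / sin t)
      (d_theta (d_theta u_par) (t, y'))
      ((d_phi (d_theta u_par) (t, y') - cos t * (d_phi u_par (t, y') / sin t)) / sin t)
      ((d_phi (d_phi u_par) (t, y') + sin t * cos t * d_theta u_par (t, y')) / (sin t * sin t))
      (Y1_par (t, y')) (d_theta Y1_par (t, y')) (d_phi Y1_par (t, y') / sin t)"
    if "y' \<in> {y'. (t, y') \<in> PU \<inter> strip}" for y'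
    using that strip_sin_nonzero[of "(t, y')"] frame_data_from_jets[of "(t, y')"]
    by (simp add: flux_phi_def)
  note D = flux2_has_real_derivative[where u = "\<lambda>y. u_par (t, y)" and ut = "\<lambda>y. d_theta u_par (t, y)"
      and up = "\<lambda>y. d_phi u_par (t, y)" and utt = "\<lambda>y. d_theta (d_theta u_par) (t, y)"
      and utp = "\<lambda>y. d_phi (d_theta u_par) (t, y)" and upp = "\<lambda>y. d_phi (d_phi u_par) (t, y)"
      and uttp = "\<lambda>y. d_phi (d_theta (d_theta u_par)) (t, y)"
      and utpp = "\<lambda>y. d_phi (d_phi (d_theta u_par)) (t, y)"
      and uppp = "\<lambda>y. d_phi (d_phi (d_phi u_par)) (t, y)" and v = "\<lambda>y. Y1_par (t, y)"
      and vt = "\<lambda>y. d_theta Y1_par (t, y)" and vp = "\<lambda>y. d_phi Y1_par (t, y)"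
      and vtp = "\<lambda>y. d_phi (d_theta Y1_par) (t, y)" and vpp = "\<lambda>y. d_phi (d_phi Y1_par) (t, y)" and c = "cos t",
      OF U V(1-3) s]
  show ?thesis
    unfolding flux_phi_d_phi_def if_P[OF True] fst_conv
    by (rule has_field_derivative_transform_within_open[OF D open_slice_snd[OF open_PU_strip]])
       (use True t eq in auto)
next
  case False
  then have "(t, y) \<in> PK" using PU_Un_PK by auto
  then have "((\<lambda>y'. flux_phi (t, y')) has_real_derivative 0) (at y)"
    by (intro has_field_derivative_transform_within_open[OF DERIV_const open_slice_snd[OF open_PK]])
       (auto simp: fluxes_PK)
  then show ?thesis
    using False by (simp add: flux_phi_d_phi_def)
qed

lemma flux_divergence_eq:
  assumes t: "q \<in> strip"
  shows "flux_theta_d_theta q + flux_phi_d_phi q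
    = sin (fst q) * (lap_dens (sph_par q) + 2 * pair_dens (sph_par q) - hess_dens (sph_par q))"
proof (cases "q \<in> PU")
  case True
  define S C where "S = sin (fst q)" and "C = cos (fst q)"
  have s: "S \<noteq> 0" using strip_sin_nonzero[OF t] by (simp add: S_def)
  let ?I = "defect_frame (u_par q) (Y1_par q) (d_theta (d_theta u_par) q)
    ((d_phi (d_theta u_par) q - C * (d_phi u_par q / S)) / S)
    ((d_phi (d_theta u_par) q - C * (d_phi u_par q / S)) / S)
    ((d_phi (d_phi u_par) q + S * C * d_theta u_par q) / (S * S))
    (d_theta (d_theta Y1_par) q) ((d_phi (d_theta Y1_par) q - C * (d_phi Y1_par q / S)) / S)
    ((d_phi (d_theta Y1_par) q - C * (d_phi Y1_par q / S)) / S)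
    ((d_phi (d_phi Y1_par) q + S * C * d_theta Y1_par q) / (S * S))"
  have eigen: "d_theta (d_theta Y1_par) q + (d_phi (d_phi Y1_par) q + S * C * d_theta Y1_par q) / (S * S)
      + 2 * Y1_par q = 0"
    using Y1_par_eigenfunction[OF True] s by (simp add: S_def C_def field_simps)
  have "flux_theta_d_theta q + flux_phi_d_phi q = S * ?I
      - S * (u_par q * (d_theta (d_theta u_par) q + (d_phi (d_phi u_par) q + S * C * d_theta u_par q) / (S * S))
        + 2 * u_par q * u_par q)
      * (d_theta (d_theta Y1_par) q + (d_phi (d_phi Y1_par) q + S * C * d_theta Y1_par q) / (S * S)
        + 2 * Y1_par q)"
    unfolding flux_theta_d_theta_def flux_phi_d_phi_def using True flux_derivatives_sum[OF s]
    by (simp add: S_def C_def)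
  also have "\<dots> = S * ?I"
    unfolding eigen by simp
  also have "\<dots> = S * (lap_dens (sph_par q) + 2 * pair_dens (sph_par q) - hess_dens (sph_par q))"
    unfolding densities_frame[OF True] defect_frame_def frame_data_from_jets[OF True strip_sin_nonzero[OF t]]
      S_def C_def by simp
  finally show ?thesis
    by (simp add: S_def)
next
  case False
  then have "q \<in> PK" using PU_Un_PK by auto
  then show ?thesis
    using False by (simp add: fluxes_PK hess_dens_def lap_dens_def pair_dens_def PU_def)
qed

lemma flux_phi_periodic: "flux_phi (t, 2 * pi) = flux_phi (t, 0)"
proof -
  have "sph_par (t, 2 * pi) = sph_par (t, 0)" "e_theta (t, 2 * pi) = e_theta (t, 0)"
    "e_phi (t, 2 * pi) = e_phi (t, 0)"
    by (simp_all add: sph_par_def e_theta_def e_phi_def)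
  moreover have "(t, 2 * pi) \<in> PU \<longleftrightarrow> (t, 0) \<in> PU"
    using calculation by (simp add: PU_def)
  ultimately show ?thesis
    unfolding flux_phi_def by simp
qed

lemma flux_theta_poles: "flux_theta (0, y) = 0" "flux_theta (pi, y) = 0"
  by (simp_all add: flux_theta_def)

definition "defect q = sin (fst q) * (lap_dens (sph_par q) + 2 * pair_dens (sph_par q) - hess_dens (sph_par q))"

lemma continuous_on_defect: "continuous_on UNIV defect"
proof -
  have "defect = (\<lambda>q. lap_dens (sph_par q) * sin (fst q) + 2 * (pair_dens (sph_par q) * sin (fst q))
      - hess_dens (sph_par q) * sin (fst q))"
    by (auto simp: defect_def algebra_simps)
  then show ?thesis
    by (simp add: continuous_intros continuous_on_densities)
qed

definition "flux_theta_avg t = integral (cbox 0 (2 * pi)) (\<lambda>y. flux_theta (t, y))"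
definition "flux_theta_d_theta_avg t = integral (cbox 0 (2 * pi)) (\<lambda>y. flux_theta_d_theta (t, y))"

lemma defect_inner_integral:
  assumes t: "t \<in> {0<..<pi}"
  shows "((\<lambda>y. defect (t, y)) has_integral flux_theta_d_theta_avg t) (cbox 0 (2 * pi))"
proof -
  have "continuous_on (cbox 0 (2 * pi)) (\<lambda>y. flux_theta_d_theta (t, y))"
    by (rule continuous_on_compose2[OF continuous_on_flux_theta_d_theta])
       (use strip_PairI[OF t] in \<open>auto intro!: continuous_intros\<close>)
  then have A: "((\<lambda>y. flux_theta_d_theta (t, y)) has_integral flux_theta_d_theta_avg t) (cbox 0 (2 * pi))"
    unfolding flux_theta_d_theta_avg_def by (rule integrable_integral[OF integrable_continuous])
  have "((\<lambda>y. flux_phi_d_phi (t, y)) has_integral (flux_phi (t, 2 * pi) - flux_phi (t, 0))) {0..2 * pi}"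
  proof (rule fundamental_theorem_of_calculus)
    fix y assume "y \<in> {0..2 * pi}"
    show "((\<lambda>y'. flux_phi (t, y')) has_vector_derivative flux_phi_d_phi (t, y)) (at y within {0..2 * pi})"
      using flux_phi_has_real_derivative[OF strip_PairI[OF t]]
      by (simp add: has_real_derivative_iff_has_vector_derivative has_vector_derivative_at_within)
  qed simp
  then have B: "((\<lambda>y. flux_phi_d_phi (t, y)) has_integral 0) (cbox 0 (2 * pi))"
    by (simp add: flux_phi_periodic)
  show ?thesis
    using has_integral_add[OF A B] flux_divergence_eq[OF strip_PairI[OF t]] by (simp add: defect_def)
qed

lemma continuous_on_flux_theta_avg: "continuous_on {0..pi} flux_theta_avg"
proof -
  have "continuous_on ({0..pi} \<times> cbox 0 (2 * pi)) (\<lambda>(x, y). flux_theta (x, y))"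
    using continuous_on_subset[OF continuous_on_flux_theta] by (simp add: case_prod_beta')
  then show ?thesis
    unfolding flux_theta_avg_def[abs_def] by (rule integral_continuous_on_param)
qed

lemma flux_theta_avg_has_real_derivative:
  assumes t: "t \<in> {0<..<pi}"
  shows "(flux_theta_avg has_real_derivative flux_theta_d_theta_avg t) (at t)"
proof -
  have "continuous_on ({0<..<pi} \<times> cbox 0 (2 * pi)) flux_theta_d_theta"
    by (rule continuous_on_subset[OF continuous_on_flux_theta_d_theta]) (auto simp: strip_def)
  then have cont: "continuous_on ({0<..<pi} \<times> cbox 0 (2 * pi)) (\<lambda>(x, y). flux_theta_d_theta (x, y))"
    by simp
  have "(flux_theta_avg has_field_derivative flux_theta_d_theta_avg t) (at t within {0<..<pi})"
    unfolding flux_theta_avg_def[abs_def] flux_theta_d_theta_avg_def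
  proof (rule leibniz_rule_field_derivative[OF _ _ cont t])
    fix x y assume "x \<in> {0<..<pi}"
    then show "((\<lambda>x. flux_theta (x, y)) has_field_derivative flux_theta_d_theta (x, y)) (at x within {0<..<pi})"
      by (rule has_field_derivative_at_within[OF flux_theta_has_real_derivative[OF strip_PairI]])
  next
    fix x :: real
    have "continuous_on (cbox 0 (2 * pi)) (\<lambda>y::real. (x, y))" by (intro continuous_intros)
    then show "(\<lambda>y. flux_theta (x, y)) integrable_on cbox 0 (2 * pi)"
      by (intro integrable_continuous continuous_on_compose2[OF continuous_on_flux_theta]) auto
  qed (rule convex_real_interval)
  then show ?thesis
    using at_within_open[OF t open_greaterThanLessThan] by simp
qed

lemma integral_defect: "integral (cbox (0, 0) (pi, 2 * pi)) defect = 0"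
proof -
  have "(flux_theta_d_theta_avg has_integral (flux_theta_avg pi - flux_theta_avg 0)) {0..pi}"
  proof (rule fundamental_theorem_of_calculus_interior[OF _ continuous_on_flux_theta_avg])
    fix t assume "t \<in> {0<..<pi}"
    then show "(flux_theta_avg has_vector_derivative flux_theta_d_theta_avg t) (at t)"
      using flux_theta_avg_has_real_derivative by (simp add: has_real_derivative_iff_has_vector_derivative)
  qed simp
  then have "(flux_theta_d_theta_avg has_integral 0) (cbox 0 pi)"
    by (simp add: flux_theta_avg_def flux_theta_poles)
  then have "((\<lambda>t. integral (cbox 0 (2 * pi)) (\<lambda>y. defect (t, y))) has_integral 0) (cbox 0 pi)"
  proof (rule has_integral_spike[where S = "{0, pi}", rotated 2])
    fix t assume "t \<in> cbox 0 pi - {0, pi}"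
    then show "integral (cbox 0 (2 * pi)) (\<lambda>y. defect (t, y)) = flux_theta_d_theta_avg t"
      using defect_inner_integral integral_unique by auto
  qed simp
  moreover have "integral (cbox (0, 0) (pi, 2 * pi)) defect
      = integral (cbox 0 pi) (\<lambda>t. integral (cbox 0 (2 * pi)) (\<lambda>y. defect (t, y)))"
    by (rule integral_prod_continuous[OF continuous_on_subset[OF continuous_on_defect]]) simp
  ultimately show ?thesis
    using integral_unique by simp
qed

lemma sphere_integral_identity:
  "sphere_integral_on U (\<lambda>x. sph_div Y x / 2 * (2 * sph_hess_sq u x - (sph_lap u x)^2))
    = sphere_integral_on U (\<lambda>x. sph_div Y x / 2 * (sph_lap u x + 2 * u x)^2)
      + 2 * sphere_integral_on U (\<lambda>x. u x * sph_hess_pair (\<lambda>y. sph_div Y y / 2) u x)"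
proof -
  let ?R = "cbox (0::real, 0::real) (pi, 2 * pi)"
  let ?I = "\<lambda>d. integral ?R (\<lambda>p. d (sph_par p) * sin (fst p))"
  have densities:
    "sphere_integral_on U (\<lambda>x. sph_div Y x / 2 * (2 * sph_hess_sq u x - (sph_lap u x)^2)) = ?I hess_dens"
    "sphere_integral_on U (\<lambda>x. sph_div Y x / 2 * (sph_lap u x + 2 * u x)^2) = ?I lap_dens"
    "sphere_integral_on U (\<lambda>x. u x * sph_hess_pair (\<lambda>y. sph_div Y y / 2) u x) = ?I pair_dens"
    unfolding sphere_integral_on_def sphere_integral_def hess_dens_def lap_dens_def pair_dens_def Y1_def
    by simp_all
  have integrable: "(\<lambda>p. hess_dens (sph_par p) * sin (fst p)) integrable_on ?R"
    "(\<lambda>p. lap_dens (sph_par p) * sin (fst p)) integrable_on ?R"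
    "(\<lambda>p. 2 * (pair_dens (sph_par p) * sin (fst p))) integrable_on ?R"
    using continuous_on_densities
    by (auto intro!: integrable_continuous continuous_on_mult[OF continuous_on_const]
        intro: continuous_on_subset)
  have "0 = integral ?R defect"
    using integral_defect by simp
  also have "\<dots> = integral ?R (\<lambda>p. lap_dens (sph_par p) * sin (fst p) + 2 * (pair_dens (sph_par p) * sin (fst p))
      - hess_dens (sph_par p) * sin (fst p))"
    unfolding defect_def[abs_def] by (simp add: algebra_simps)
  also have "\<dots> = ?I lap_dens + 2 * ?I pair_dens - ?I hess_dens"
    using integrable by (simp add: integral_diff integral_add integrable_add)
  finally show ?thesis
    unfolding densities by simp
qed

end

theorem mainTheorem16:
  fixes U :: "(real^3) set" and Y :: "real^3 \<Rightarrow> real^3" and u :: "real^3 \<Rightarrow> real"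
  assumes "U \<subseteq> sphere 0 1"
    and "openin (top_of_set (sphere 0 1)) U"
    and "Cinf_on (scone U) (hext Y)"
    and "\<forall>x\<in>U. Y x \<bullet> x = 0"
    and "conformal_killing_on U Y"
    and "Cinf_on (scone U) (hext u)"
    and "\<exists>K. compact K \<and> K \<subseteq> U \<and> (\<forall>x\<in>sphere 0 1 - K. u x = 0)"
  shows "sphere_integral_on U (\<lambda>x. sph_div Y x / 2 * (2 * sph_hess_sq u x - (sph_lap u x)^2))
       = sphere_integral_on U (\<lambda>x. sph_div Y x / 2 * (sph_lap u x + 2 * u x)^2)
         + 2 * sphere_integral_on U (\<lambda>x. u x * sph_hess_pair (\<lambda>y. sph_div Y y / 2) u x)"
proof -
  obtain K where "compact K" "K \<subseteq> U" "\<forall>x\<in>sphere 0 1 - K. u x = 0"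
    using assms(7) by blast
  then interpret conformal_killing_setup U Y u K
    using assms(1-6) by unfold_locales
  show ?thesis
    by (rule sphere_integral_identity)
qed

end
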